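(* Let $\tau\in M$ be a semi-simple point and $x_a,x_b$ two one-point cycles in $V_{\tau,\lambda}$. Then the phase form $$\mathcal{W}_{a,b}(\tau,\lambda)=\sum_{i=1}^N\big(I^{(0)}_a(\tau,\lambda),\partial_i\bullet I^{(0)}_b(\tau,\lambda)\big)d\tau_i$$ satisfies $\mathcal{W}_{a,b}=d^M\log(x_a-x_b)$ if $a\ne b$, and $\mathcal{W}_{a,a}=-d^M\log\big(f'_\tau(x_a)\big)$, where $d^M$ is the de Rham differential on $M$ (with $\lambda$ fixed) and $'$ denotes $\partial/\partial x$.
   Context: Setup: fix integers $k,m\ge1$, $N=k+m$, $Q\in\mathbb{C}^*$. $M$ is the space of Laurent polynomials $f_t(x)=x^k+\sum_{i=1}^kt_ix^{k-i}+\sum_{j=1}^{m-1}t_{k+j}(Qe^{t_N}/x)^j+(Qe^{t_N}/x)^m$, $\omega=dx/x$, flat coordinates $\tau_1,\dots,\tau_N$ ($\tau_i=-\frac ki\mathrm{Res}_{x=\infty}f^{i/k}\omega$ for $1\le i\le k-1$, $\tau_{k+m-j}=\frac mj\mathrm{Res}_{x=0}f^{j/m}\omega$ for $1\le j\le m-1$, $\tau_k=t_k$, $\tau_N=mt_N$), $\partial_i=\partial/\partial\tau_i$, $f_\tau$ the corresponding Laurent polynomial, product $\bullet$ from $T_fM\cong\mathbb{C}[x,x^{-1}]/\langle\partial_xf\rangle$, residue pairing $(\partial,\partial')=-(\mathrm{Res}_{x=0}+\mathrm{Res}_{x=\infty})\frac{(\partial f\omega)(\partial'f\omega)}{df}$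 (identifying vectors and covectors). $\tau$ is semi-simple if $f_\tau$ has $N$ non-degenerate critical points whose critical values form local coordinates near $\tau$. $V_{\tau,\lambda}=f_\tau^{-1}(\lambda)$; a one-point cycle $x_a(\tau,\lambda)$ is a solution of $f_\tau(x)=\lambda$ (with a branch of $\log x_a$), varying analytically. $d^{-1}$ is linear with $d^{-1}(x^jdx)=x^{j+1}/(j+1)$ ($j\ne-1$), $d^{-1}(dx/x)=\log x$; $(I^{(0)}_a(\tau,\lambda),\partial_i)=-\partial_i\big[d^{-1}(\omega)|_{x=x_a(\tau,\lambda)}\big]=-\partial_i\log x_a(\tau,\lambda)$. *)

theory Defs
  imports "HOL-Complex_Analysis.Complex_Analysis"
begin

text \<open>Points of M are given by the parameters t_1..t_N (t :: nat => complex, only the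
values at 1..N matter).  Tangent vectors are written in these t-coordinates; all notions
below (product, residue pairing, phase form, d^M) are coordinate independent.\<close>

definition fL :: "nat \<Rightarrow> nat \<Rightarrow> complex \<Rightarrow> (nat \<Rightarrow> complex) \<Rightarrow> complex \<Rightarrow> complex" where
  "fL k m Q t x = x ^ k + (\<Sum>i=1..k. t i * x ^ (k - i))
     + (\<Sum>j=1..m-1. t (k + j) * (Q * exp (t (k + m)) / x) ^ j)
     + (Q * exp (t (k + m)) / x) ^ m"

definition fprime :: "nat \<Rightarrow> nat \<Rightarrow> complex \<Rightarrow> (nat \<Rightarrow> complex) \<Rightarrow> complex \<Rightarrow> complex" where
  "fprime k m Q t x = deriv (fL k m Q t) x"

definition shiftp :: "(nat \<Rightarrow> complex) \<Rightarrow> complex \<Rightarrow> (nat \<Rightarrow> complex) \<Rightarrow> (nat \<Rightarrow> complex)" where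
  "shiftp t s v = (\<lambda>i. t i + s * v i)"

definition tangent :: "nat \<Rightarrow> (nat \<Rightarrow> complex) \<Rightarrow> bool" where
  "tangent N v \<longleftrightarrow> (\<forall>i. i \<notin> {1..N} \<longrightarrow> v i = 0)"

text \<open>directional derivative on M (d^M applied to the vector v)\<close>
definition Dir :: "(nat \<Rightarrow> complex) \<Rightarrow> (nat \<Rightarrow> complex) \<Rightarrow> ((nat \<Rightarrow> complex) \<Rightarrow> complex) \<Rightarrow> complex" where
  "Dir t v F = deriv (\<lambda>s. F (shiftp t s v)) 0"

definition dirf :: "nat \<Rightarrow> nat \<Rightarrow> complex \<Rightarrow> (nat \<Rightarrow> complex) \<Rightarrow> (nat \<Rightarrow> complex) \<Rightarrow> complex \<Rightarrow> complex" where
  "dirf k m Q t v x = Dir t v (\<lambda>t'. fL k m Q t' x)"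

definition laurent_poly :: "(complex \<Rightarrow> complex) \<Rightarrow> bool" where
  "laurent_poly g \<longleftrightarrow> (\<exists>p :: complex poly. \<exists>n::nat. \<forall>x. x \<noteq> 0 \<longrightarrow> g x = poly p x / x ^ n)"

text \<open>u = v \<bullet> w : \<partial>_u f \<equiv> \<partial>_v f * \<partial>_w f  mod  \<partial>_x f  in C[x,x^-1]\<close>
definition is_prod :: "nat \<Rightarrow> nat \<Rightarrow> complex \<Rightarrow> (nat \<Rightarrow> complex) \<Rightarrow> (nat \<Rightarrow> complex)
     \<Rightarrow> (nat \<Rightarrow> complex) \<Rightarrow> (nat \<Rightarrow> complex) \<Rightarrow> bool" where
  "is_prod k m Q t v w u \<longleftrightarrow> tangent (k + m) u \<and>
     (\<exists>g. laurent_poly g \<and> (\<forall>x. x \<noteq> 0 \<longrightarrow>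
        dirf k m Q t u x - dirf k m Q t v x * dirf k m Q t w x = g x * fprime k m Q t x))"

definition residue_inf :: "(complex \<Rightarrow> complex) \<Rightarrow> complex" where
  "residue_inf h = residue (\<lambda>z. - h (1 / z) / z ^ 2) 0"

text \<open>residue pairing: -(Res_0 + Res_inf) (\<partial>f \<omega>)(\<partial>'f \<omega>)/df, with \<omega> = dx/x\<close>
definition pair :: "nat \<Rightarrow> nat \<Rightarrow> complex \<Rightarrow> (nat \<Rightarrow> complex) \<Rightarrow> (nat \<Rightarrow> complex)
     \<Rightarrow> (nat \<Rightarrow> complex) \<Rightarrow> complex" where
  "pair k m Q t v w =
     (let h = (\<lambda>x. dirf k m Q t v x * dirf k m Q t w x / (x ^ 2 * fprime k m Q t x))
      in - (residue h 0 + residue_inf h))"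

definition nbhd :: "nat \<Rightarrow> (nat \<Rightarrow> complex) \<Rightarrow> real \<Rightarrow> (nat \<Rightarrow> complex) set" where
  "nbhd N t r = {t'. (\<forall>i\<in>{1..N}. cmod (t' i - t i) < r) \<and> (\<forall>i. i \<notin> {1..N} \<longrightarrow> t' i = t i)}"

text \<open>analytic functions on M near t (continuous and separately holomorphic; Osgood)\<close>
definition analyticM :: "nat \<Rightarrow> ((nat \<Rightarrow> complex) \<Rightarrow> complex) \<Rightarrow> (nat \<Rightarrow> complex) \<Rightarrow> bool" where
  "analyticM N F t \<longleftrightarrow> (\<exists>r>0. continuous_on (nbhd N t r) F \<and>
     (\<forall>t'\<in>nbhd N t r. \<forall>i\<in>{1..N}. (\<lambda>z. F (t'(i := z))) field_differentiable at (t' i)))"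

definition analyticML :: "nat \<Rightarrow> ((nat \<Rightarrow> complex) \<Rightarrow> complex \<Rightarrow> complex) \<Rightarrow> (nat \<Rightarrow> complex) \<Rightarrow> complex \<Rightarrow> bool" where
  "analyticML N F t lam \<longleftrightarrow> (\<exists>r>0. continuous_on (nbhd N t r \<times> ball lam r) (\<lambda>(t', l). F t' l) \<and>
     (\<forall>t'\<in>nbhd N t r. \<forall>l\<in>ball lam r.
        (\<forall>i\<in>{1..N}. (\<lambda>z. F (t'(i := z)) l) field_differentiable at (t' i)) \<and>
        (\<lambda>z. F t' z) field_differentiable at l))"

text \<open>one-point cycle x_a(t,\<lambda>) with a branch L = log x_a, near (t, \<lambda>)\<close>
definition one_point_cycle :: "nat \<Rightarrow> nat \<Rightarrow> complex \<Rightarrow> (nat \<Rightarrow> complex) \<Rightarrow> complex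
     \<Rightarrow> ((nat \<Rightarrow> complex) \<Rightarrow> complex \<Rightarrow> complex) \<Rightarrow> ((nat \<Rightarrow> complex) \<Rightarrow> complex \<Rightarrow> complex) \<Rightarrow> bool" where
  "one_point_cycle k m Q t lam X L \<longleftrightarrow>
     analyticML (k + m) X t lam \<and> analyticML (k + m) L t lam \<and>
     (\<exists>r>0. \<forall>t'\<in>nbhd (k + m) t r. \<forall>l\<in>ball lam r.
        fL k m Q t' (X t' l) = l \<and> exp (L t' l) = X t' l)"

text \<open>semi-simple points: N non-degenerate critical points, critical values = local coordinates\<close>
definition semisimple :: "nat \<Rightarrow> nat \<Rightarrow> complex \<Rightarrow> (nat \<Rightarrow> complex) \<Rightarrow> bool" where
  "semisimple k m Q t \<longleftrightarrow> (\<exists>P r. r > 0 \<and>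
     (\<forall>j\<in>{1..k+m}. analyticM (k + m) (P j) t) \<and>
     (\<forall>t'\<in>nbhd (k + m) t r. \<forall>j\<in>{1..k+m}. P j t' \<noteq> 0 \<and> fprime k m Q t' (P j t') = 0) \<and>
     inj_on (\<lambda>j. P j t) {1..k+m} \<and>
     (\<forall>j\<in>{1..k+m}. deriv (fprime k m Q t) (P j t) \<noteq> 0) \<and>
     (\<forall>v. tangent (k + m) v \<and> (\<forall>j\<in>{1..k+m}. Dir t v (\<lambda>t'. fL k m Q t' (P j t')) = 0)
          \<longrightarrow> (\<forall>i. v i = 0)))"

text \<open>A is the vector I^(0)_a: (A, v) = - d^M log x_a (v) for every tangent vector v\<close>
definition represents_I0 :: "nat \<Rightarrow> nat \<Rightarrow> complex \<Rightarrow> (nat \<Rightarrow> complex) \<Rightarrow> complex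
     \<Rightarrow> ((nat \<Rightarrow> complex) \<Rightarrow> complex \<Rightarrow> complex) \<Rightarrow> (nat \<Rightarrow> complex) \<Rightarrow> bool" where
  "represents_I0 k m Q t lam L A \<longleftrightarrow> tangent (k + m) A \<and>
     (\<forall>v. tangent (k + m) v \<longrightarrow> pair k m Q t A v = - Dir t v (\<lambda>t'. L t' lam))"

end

theory Submission
  imports Defs
begin

(* In the chart z = 1/x the residue at infinity is an ordinary residue, so the residue
   theorem on a large circle shows that the residues of a function with finitely many
   singularities, the one at infinity included, add up to zero.  Every tangent vector v
   gives dirf v = P_v / x^m with deg P_v < N, and every such polynomial occurs; on these
   polynomials the residue pairing is nondegenerate, with reproducing kernel
   (x^(m+1) f'(x) - x^(m+1) f'(c)) / ((x - c) f'(c)) at c.  Differentiating f(x_a) = lambda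
   and exp (log x_a) = x_a along v shows that I_a^(0) is represented by the kernel at x_a:
   dirf I_a = x (f'(x) - f'(x_a)) / ((x - x_a) f'(x_a)).  Substituting this and
   dirf u = dirf v dirf I_b + g f' into the pairing, only the poles at x_a and x_b
   contribute, and their residues are the derivatives of log (x_a - x_b), respectively
   of - log f'(x_a). *)

section \<open>Residues at zero and at infinity\<close>

lemma vector_derivative_reversepath_circlepath:
  "vector_derivative (reversepath (circlepath 0 R)) (at x) =
      - (2 * pi * \<i> * R * exp (2 * of_real pi * \<i> * of_real (1 - x)))"
proof -
  have "((circlepath 0 R) \<circ> (\<lambda>x. 1 - x) has_vector_derivative
         (-1) *\<^sub>R (2 * pi * \<i> * R * exp (2 * of_real pi * \<i> * (1 - x)))) (at x)"
    by (intro vector_diff_chain_within has_vector_derivative_circlepath derivative_eq_intros) auto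
  then show ?thesis
    by (intro vector_derivative_at) (simp add: reversepath_def o_def)
qed

lemma has_contour_integral_inversion_circlepath:
  fixes h :: "complex \<Rightarrow> complex"
  assumes "e > 0"
  shows "((\<lambda>z. - h (1/z) / z^2) has_contour_integral I) (circlepath 0 e) \<longleftrightarrow>
         (h has_contour_integral I) (reversepath (circlepath 0 (1/e)))"
proof -
  have "(- h (1 / circlepath 0 e x) / (circlepath 0 e x)\<^sup>2) * vector_derivative (circlepath 0 e) (at x)
     = h (reversepath (circlepath 0 (1/e)) x) * vector_derivative (reversepath (circlepath 0 (1/e))) (at x)"
    for x
  proof -
    define E where "E = exp (2 * of_real pi * \<i> * of_real x)"
    have "2 * of_real pi * \<i> * of_real (1 - x) = 2 * of_real pi * \<i> - 2 * of_real pi * \<i> * of_real x"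
      by (simp add: algebra_simps)
    then have E1: "exp (2 * of_real pi * \<i> * of_real (1 - x)) = 1 / E"
      by (simp add: E_def exp_diff)
    have c1: "circlepath 0 e x = of_real e * E" by (simp add: circlepath E_def)
    have c2: "reversepath (circlepath 0 (1/e)) x = 1 / (of_real e * E)"
      using E1 by (simp add: reversepath_def circlepath)
    have "E \<noteq> 0" by (simp add: E_def)
    then show ?thesis
      unfolding c1 c2 vector_derivative_reversepath_circlepath vector_derivative_circlepath E1 E_def[symmetric]
      using assms by (simp add: field_simps power2_eq_square)
  qed
  then show ?thesis unfolding has_contour_integral by simp
qed

lemma holomorphic_inversion_chart:
  fixes h :: "complex \<Rightarrow> complex"
  assumes "finite S" and "h holomorphic_on UNIV - S"
  obtains R where "R > 0" "\<And>p. p \<in> S \<Longrightarrow> norm p < R"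
    "(\<lambda>z. - h (1/z) / z^2) holomorphic_on ball 0 (1/R) - {0}"
proof -
  define R where "R = Max (norm ` insert 0 S) + 1"
  have R_gt: "norm p < R" if "p \<in> insert 0 S" for p
  proof -
    have "norm p \<le> Max (norm ` insert 0 S)" using assms(1) that by (intro Max_ge) auto
    then show ?thesis by (simp add: R_def)
  qed
  then have "R > 0" by fastforce
  have "(\<lambda>z. 1/z) ` (ball 0 (1/R) - {0}) \<subseteq> UNIV - S"
  proof
    fix y :: complex assume "y \<in> (\<lambda>z. 1/z) ` (ball 0 (1/R) - {0})"
    then obtain z where z: "z \<in> ball 0 (1/R)" "z \<noteq> 0" and y: "y = 1/z" by blast
    have "R < norm y" using z \<open>R > 0\<close> by (simp add: y norm_divide field_simps)
    then show "y \<in> UNIV - S" using R_gt[of y] by auto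
  qed
  then have "(h \<circ> (\<lambda>z. 1/z)) holomorphic_on ball 0 (1/R) - {0}"
    by (intro holomorphic_on_compose_gen[OF _ assms(2)] holomorphic_intros) auto
  then have "(\<lambda>z. - h (1/z) / z^2) holomorphic_on ball 0 (1/R) - {0}"
    unfolding o_def by (intro holomorphic_intros) auto
  with \<open>R > 0\<close> R_gt show thesis by (intro that) auto
qed

lemma sum_residues_with_infinity:
  fixes h :: "complex \<Rightarrow> complex"
  assumes S: "finite S" and holo: "h holomorphic_on UNIV - S"
  shows "(\<Sum>p\<in>S. residue h p) + residue_inf h = 0"
proof -
  obtain R where R: "R > 0" "\<And>p. p \<in> S \<Longrightarrow> norm p < R"
    and G: "(\<lambda>z. - h (1/z) / z^2) holomorphic_on ball 0 (1/R) - {0}"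
    using holomorphic_inversion_chart[OF assms] by blast
  have "((\<lambda>z. - h (1/z) / z^2) has_contour_integral 2 * pi * \<i> * residue_inf h) (circlepath 0 (1/(2*R)))"
    unfolding residue_inf_def
    by (rule base_residue[of "ball 0 (1/R)"]) (use R G in \<open>auto simp: field_simps\<close>)
  then have "(h has_contour_integral 2 * pi * \<i> * residue_inf h) (reversepath (circlepath 0 (2*R)))"
    using has_contour_integral_inversion_circlepath[of "1/(2*R)"] R by simp
  then have "(h has_contour_integral - (2 * pi * \<i> * residue_inf h)) (circlepath 0 (2*R))"
    using has_contour_integral_reversepath[of "reversepath (circlepath 0 (2*R))"] by fastforce
  then have "contour_integral (circlepath 0 (2*R)) h = - (2 * pi * \<i> * residue_inf h)"
    by (rule contour_integral_unique)
  moreover have "contour_integral (circlepath 0 (2*R)) h = 2 * pi * \<i> * (\<Sum>p\<in>S. residue h p)"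
  proof -
    have inside: "norm p < 2*R" if "p \<in> S" for p using R(2)[OF that] R(1) by linarith
    then have "path_image (circlepath 0 (2*R)) \<subseteq> UNIV - S"
      using R(1) by fastforce
    then have "contour_integral (circlepath 0 (2*R)) h =
        2 * pi * \<i> * (\<Sum>p\<in>S. winding_number (circlepath 0 (2*R)) p * residue h p)"
      by (intro Residue_theorem) (use S holo R(1) in auto)
    with inside show ?thesis by (simp add: winding_number_circlepath)
  qed
  ultimately have "2 * pi * \<i> * (\<Sum>p\<in>S. residue h p) = - (2 * pi * \<i> * residue_inf h)"
    by simp
  then have "2 * pi * \<i> * ((\<Sum>p\<in>S. residue h p) + residue_inf h) = 0"
    by (simp only: distrib_left eq_neg_iff_add_eq_0)
  then show ?thesis by simp
qed

definition res_0_inf :: "(complex \<Rightarrow> complex) \<Rightarrow> complex" where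
  "res_0_inf h = residue h 0 + residue_inf h"

definition finitely_singular :: "(complex \<Rightarrow> complex) \<Rightarrow> bool" where
  "finitely_singular h \<longleftrightarrow> (\<exists>S. finite S \<and> h holomorphic_on UNIV - S)"

lemma finitely_singular_rational:
  "Q \<noteq> 0 \<Longrightarrow> finitely_singular (\<lambda>x. poly P x / poly Q x)"
  unfolding finitely_singular_def
  by (intro exI[of _ "{x. poly Q x = 0}"]) (auto simp: poly_roots_finite intro!: holomorphic_intros)

lemma finitely_singular_add:
  assumes "finitely_singular h1" "finitely_singular h2"
  shows "finitely_singular (\<lambda>x. h1 x + h2 x)"
proof -
  obtain S1 S2 where "finite S1" "h1 holomorphic_on UNIV - S1" "finite S2" "h2 holomorphic_on UNIV - S2"
    using assms unfolding finitely_singular_def by blast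
  then show ?thesis
    unfolding finitely_singular_def
    by (intro exI[of _ "S1 \<union> S2"]) (auto intro!: holomorphic_intros elim: holomorphic_on_subset)
qed

lemma finitely_singular_holomorphic_punctured:
  assumes "finitely_singular h"
  obtains r where "r > 0" "h holomorphic_on ball 0 r - {0}"
    "(\<lambda>z. - h (1/z) / z^2) holomorphic_on ball 0 r - {0}"
proof -
  obtain S where S: "finite S" "h holomorphic_on UNIV - S"
    using assms unfolding finitely_singular_def by blast
  obtain R where R: "R > 0" "(\<lambda>z. - h (1/z) / z^2) holomorphic_on ball 0 (1/R) - {0}"
    using holomorphic_inversion_chart[OF S] by blast
  obtain e where e: "e > 0" "\<forall>w\<in>ball 0 e. w \<in> UNIV \<and> (w \<noteq> 0 \<longrightarrow> w \<notin> S)"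
    using finite_ball_avoid[of UNIV S 0] S(1) by auto
  show thesis
  proof (rule that[of "min e (1/R)"])
    show "h holomorphic_on ball 0 (min e (1/R)) - {0}"
      by (rule holomorphic_on_subset[OF S(2)]) (use e in auto)
    show "(\<lambda>z. - h (1/z) / z^2) holomorphic_on ball 0 (min e (1/R)) - {0}"
      by (rule holomorphic_on_subset[OF R(2)]) auto
  qed (use e R in auto)
qed

lemma res_0_inf_add:
  assumes "finitely_singular h1" "finitely_singular h2"
  shows "res_0_inf (\<lambda>x. h1 x + h2 x) = res_0_inf h1 + res_0_inf h2"
proof -
  obtain r1 where r1: "r1 > 0" "h1 holomorphic_on ball 0 r1 - {0}"
    "(\<lambda>z. - h1 (1/z) / z^2) holomorphic_on ball 0 r1 - {0}"
    using finitely_singular_holomorphic_punctured[OF assms(1)] by blast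
  obtain r2 where r2: "r2 > 0" "h2 holomorphic_on ball 0 r2 - {0}"
    "(\<lambda>z. - h2 (1/z) / z^2) holomorphic_on ball 0 r2 - {0}"
    using finitely_singular_holomorphic_punctured[OF assms(2)] by blast
  let ?B = "ball 0 (min r1 r2) - {0}"
  have "residue (\<lambda>x. h1 x + h2 x) 0 = residue h1 0 + residue h2 0"
    by (rule residue_add[of "ball 0 (min r1 r2)"])
       (use r1 r2 in \<open>auto elim!: holomorphic_on_subset\<close>)
  moreover have "residue_inf (\<lambda>x. h1 x + h2 x) =
      residue (\<lambda>z. - h1 (1/z) / z^2 + - h2 (1/z) / z^2) 0"
    unfolding residue_inf_def by (intro arg_cong2[where f=residue] ext refl) (simp add: add_divide_distrib diff_divide_distrib)
  moreover have "\<dots> = residue_inf h1 + residue_inf h2"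
    unfolding residue_inf_def
    by (rule residue_add[of "ball 0 (min r1 r2)"])
       (use r1 r2 in \<open>auto elim!: holomorphic_on_subset\<close>)
  ultimately show ?thesis by (simp add: res_0_inf_def)
qed

lemma res_0_inf_diff:
  assumes "finitely_singular h1" "finitely_singular h2"
  shows "res_0_inf (\<lambda>x. h1 x - h2 x) = res_0_inf h1 - res_0_inf h2"
proof -
  obtain r1 where r1: "r1 > 0" "h1 holomorphic_on ball 0 r1 - {0}"
    "(\<lambda>z. - h1 (1/z) / z^2) holomorphic_on ball 0 r1 - {0}"
    using finitely_singular_holomorphic_punctured[OF assms(1)] by blast
  obtain r2 where r2: "r2 > 0" "h2 holomorphic_on ball 0 r2 - {0}"
    "(\<lambda>z. - h2 (1/z) / z^2) holomorphic_on ball 0 r2 - {0}"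
    using finitely_singular_holomorphic_punctured[OF assms(2)] by blast
  have "residue (\<lambda>x. h1 x - h2 x) 0 = residue h1 0 - residue h2 0"
    by (rule residue_diff[of "ball 0 (min r1 r2)"])
       (use r1 r2 in \<open>auto elim!: holomorphic_on_subset\<close>)
  moreover have "residue_inf (\<lambda>x. h1 x - h2 x) =
      residue (\<lambda>z. - h1 (1/z) / z^2 - - h2 (1/z) / z^2) 0"
    unfolding residue_inf_def by (intro arg_cong2[where f=residue] ext refl) (simp add: add_divide_distrib diff_divide_distrib)
  moreover have "\<dots> = residue_inf h1 - residue_inf h2"
    unfolding residue_inf_def
    by (rule residue_diff[of "ball 0 (min r1 r2)"])
       (use r1 r2 in \<open>auto elim!: holomorphic_on_subset\<close>)
  ultimately show ?thesis by (simp add: res_0_inf_def)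
qed

lemma res_0_inf_cong:
  assumes "finite Z" and eq: "\<And>x. x \<notin> Z \<Longrightarrow> h1 x = h2 x"
  shows "res_0_inf h1 = res_0_inf h2"
proof -
  have avoid: "eventually (\<lambda>y. y \<notin> A) (at 0)" if "finite A" for A :: "complex set"
    using that islimpt_iff_eventually islimpt_finite by blast
  have "residue h1 0 = residue h2 0"
    by (rule residue_cong[OF eventually_mono[OF avoid[OF assms(1)]]]) (auto simp: eq)
  moreover have "residue_inf h1 = residue_inf h2"
    unfolding residue_inf_def
  proof (rule residue_cong[OF eventually_mono[OF avoid]])
    show "finite ((\<lambda>x. 1/x) ` Z)" using assms(1) by simp
    show "- h1 (1/x) / x\<^sup>2 = - h2 (1/x) / x\<^sup>2" if "x \<notin> (\<lambda>x. 1/x) ` Z" for x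
    proof -
      have "1/x \<notin> Z" using that by (metis image_eqI divide_divide_eq_right div_by_1 mult_1)
      then show ?thesis by (simp add: eq)
    qed
  qed simp
  ultimately show ?thesis by (simp add: res_0_inf_def)
qed

lemma res_0_inf_holomorphic:
  "h holomorphic_on UNIV - {0} \<Longrightarrow> res_0_inf h = 0"
  using sum_residues_with_infinity[of "{0}" h] by (simp add: res_0_inf_def)

lemma res_0_inf_simple_pole:
  assumes c: "c \<noteq> 0" and phi: "phi holomorphic_on UNIV - {0}"
  shows "res_0_inf (\<lambda>x. phi x / (x - c)) = - phi c"
proof -
  have "residue (\<lambda>x. phi x / (x - c)) c = phi c"
    by (rule residue_simple[of "UNIV - {0}"]) (use c phi in \<open>auto intro: open_delete\<close>)
  moreover have "(\<lambda>x. phi x / (x - c)) holomorphic_on UNIV - {0, c}"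
    by (intro holomorphic_intros holomorphic_on_subset[OF phi]) auto
  ultimately show ?thesis
    using sum_residues_with_infinity[of "{0, c}" "\<lambda>x. phi x / (x - c)"] c
    by (simp add: res_0_inf_def eq_neg_iff_add_eq_0 add_ac)
qed

lemma res_0_inf_double_pole:
  assumes c: "c \<noteq> 0" and phi: "phi holomorphic_on UNIV - {0}"
  shows "res_0_inf (\<lambda>x. phi x / (x - c)^2) = - deriv phi c"
proof -
  have "residue (\<lambda>x. phi x / (x - c) ^ Suc 1) c = (deriv ^^ 1) phi c / fact 1"
    by (rule residue_holomorphic_over_power[of "UNIV - {0}"])
       (use c phi in \<open>auto intro: open_delete\<close>)
  moreover have "(\<lambda>x. phi x / (x - c)^2) holomorphic_on UNIV - {0, c}"
    by (intro holomorphic_intros holomorphic_on_subset[OF phi]) auto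
  ultimately show ?thesis
    using sum_residues_with_infinity[of "{0, c}" "\<lambda>x. phi x / (x - c)^2"] c
    by (simp add: res_0_inf_def eq_neg_iff_add_eq_0 add_ac numeral_2_eq_2)
qed

lemma res_0_inf_two_poles:
  assumes "a \<noteq> 0" "b \<noteq> 0" "a \<noteq> b" and phi: "phi holomorphic_on UNIV - {0}"
  shows "res_0_inf (\<lambda>x. phi x / ((x - a) * (x - b))) = (phi b - phi a) / (a - b)"
proof -
  let ?psi = "\<lambda>x. phi x / (a - b)"
  have psi: "?psi holomorphic_on UNIV - {0}" by (intro holomorphic_intros phi) (use assms in auto)
  have sing: "finitely_singular (\<lambda>x. ?psi x / (x - c))" for c
    unfolding finitely_singular_def
    by (intro exI[of _ "{0, c}"] conjI holomorphic_intros holomorphic_on_subset[OF psi]) auto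
  have "res_0_inf (\<lambda>x. phi x / ((x - a) * (x - b))) =
      res_0_inf (\<lambda>x. ?psi x / (x - a) - ?psi x / (x - b))"
  proof (rule res_0_inf_cong[of "{a, b}"])
    fix x assume "x \<notin> {a, b}"
    then have "x - a \<noteq> 0" "x - b \<noteq> 0" "a - b \<noteq> 0" using assms by auto
    then show "phi x / ((x - a) * (x - b)) = ?psi x / (x - a) - ?psi x / (x - b)"
      by (simp add: divide_simps) (simp add: algebra_simps)
  qed simp
  also have "\<dots> = - ?psi a + ?psi b"
    using res_0_inf_diff[OF sing sing] res_0_inf_simple_pole[OF _ psi] assms by simp
  finally show ?thesis by (simp add: diff_divide_distrib)
qed

lemma res_0_inf_rational:
  fixes P Q :: "complex poly"
  assumes Q0: "poly Q 0 \<noteq> 0" and deg: "degree P + 2 \<le> degree Q"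
  shows "res_0_inf (\<lambda>x. poly P x / poly Q x) = 0"
proof -
  have "residue (\<lambda>x. poly P x / poly Q x) 0 = 0"
    by (rule residue_holo[of "{x. poly Q x \<noteq> 0}"])
       (use Q0 in \<open>auto intro!: holomorphic_intros open_Collect_neq continuous_on_poly continuous_on_id continuous_on_const\<close>)
  moreover have "residue_inf (\<lambda>x. poly P x / poly Q x) = 0"
  proof -
    define d where "d = degree Q - degree P - 2"
    define g where "g = (\<lambda>z. - (poly (reflect_poly P) z * z ^ d) / poly (reflect_poly Q) z)"
    have "- (poly P (1/z) / poly Q (1/z)) / z\<^sup>2 = g z" if z: "z \<noteq> 0" for z
    proof -
      have "degree Q = d + degree P + 2" using deg by (simp add: d_def)
      then have "z ^ degree Q = z ^ d * z ^ degree P * z^2" by (simp add: power_add power2_eq_square)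
      then show ?thesis
        using z poly_reflect_poly_nz[OF z, of P] poly_reflect_poly_nz[OF z, of Q]
        by (simp add: g_def field_simps)
    qed
    then have "residue_inf (\<lambda>x. poly P x / poly Q x) = residue g 0"
      unfolding residue_inf_def
      by (intro residue_cong) (auto simp: eventually_at_filter)
    also have "\<dots> = 0"
    proof (rule residue_holo[of "{z. poly (reflect_poly Q) z \<noteq> 0}"])
      show "0 \<in> {z. poly (reflect_poly Q) z \<noteq> 0}" using Q0 by (auto simp: poly_0_coeff_0)
    qed (auto simp: g_def intro!: holomorphic_intros open_Collect_neq continuous_on_poly continuous_on_id continuous_on_const)
    finally show ?thesis .
  qed
  ultimately show ?thesis by (simp add: res_0_inf_def)
qed

section \<open>Implicit differentiation and Laurent polynomials\<close>

lemma has_field_derivative_implicit: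
  assumes f: "(f has_field_derivative f') (at (g 0))" and "f' \<noteq> 0"
    and g: "isCont g 0" and h: "(h has_field_derivative h') (at 0)"
    and eq: "eventually (\<lambda>s. f (g s) = h s) (nhds 0)"
  shows "(g has_field_derivative h' / f') (at 0)"
proof -
  obtain phi where phi: "\<And>z. f z - f (g 0) = phi z * (z - g 0)" "isCont phi (g 0)" "phi (g 0) = f'"
    using f unfolding CARAT_DERIV by blast
  have h0: "f (g 0) = h 0" using eventually_nhds_x_imp_x[OF eq] .
  have lim_phi: "((\<lambda>s. phi (g s)) \<longlongrightarrow> f') (at 0)"
    using isCont_tendsto_compose[OF phi(2)] g phi(3) by (simp add: isCont_def)
  have "eventually (\<lambda>s. phi (g s) \<noteq> 0) (at 0)"
    using tendsto_imp_eventually_ne[OF lim_phi \<open>f' \<noteq> 0\<close>] .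
  moreover have "eventually (\<lambda>s. f (g s) = h s) (at 0)"
    using eq by (auto simp: eventually_at_filter elim: eventually_mono)
  ultimately have "eventually (\<lambda>s. ((h s - h 0) / (s - 0)) / phi (g s) = (g s - g 0) / (s - 0)) (at 0)"
  proof eventually_elim
    case (elim s)
    then have "h s - h 0 = phi (g s) * (g s - g 0)" using phi(1)[of "g s"] h0 by simp
    with elim(1) show ?case by simp
  qed
  moreover have "((\<lambda>s. ((h s - h 0) / (s - 0)) / phi (g s)) \<longlongrightarrow> h' / f') (at 0)"
    using h lim_phi \<open>f' \<noteq> 0\<close> unfolding has_field_derivative_iff by (intro tendsto_intros)
  ultimately show ?thesis
    unfolding has_field_derivative_iff by (fast intro: Lim_transform_eventually)
qed

lemma has_field_derivative_mult_vanishing: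
  assumes u: "(u has_field_derivative u') (at 0)" "u 0 = 0" and w: "isCont w 0"
  shows "((\<lambda>s. u s * w s) has_field_derivative u' * w 0) (at 0)"
proof -
  have "((\<lambda>s. (u s - u 0) / (s - 0) * w s) \<longlongrightarrow> u' * w 0) (at 0)"
    using u w unfolding has_field_derivative_iff isCont_def by (intro tendsto_intros)
  then show ?thesis
    unfolding has_field_derivative_iff using u(2) by simp
qed

definition laurent :: "int set \<Rightarrow> (int \<Rightarrow> complex) \<Rightarrow> complex \<Rightarrow> complex" where
  "laurent I c x = (\<Sum>n\<in>I. c n * x powi n)"

definition laurent_deriv :: "int set \<Rightarrow> (int \<Rightarrow> complex) \<Rightarrow> complex \<Rightarrow> complex" where
  "laurent_deriv I c x = (\<Sum>n\<in>I. c n * of_int n * x powi (n - 1))"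

lemma has_field_derivative_laurent:
  assumes "x \<noteq> 0"
  shows "(laurent I c has_field_derivative laurent_deriv I c x) (at x)"
  unfolding laurent_def laurent_deriv_def using assms
  by (intro DERIV_sum) (auto intro!: derivative_eq_intros)

lemma has_field_derivative_laurent_deriv:
  assumes "x \<noteq> 0"
  shows "(laurent_deriv I c has_field_derivative
           (\<Sum>n\<in>I. c n * of_int n * of_int (n - 1) * x powi (n - 2))) (at x)"
  unfolding laurent_deriv_def using assms
  by (intro DERIV_sum) (auto intro!: derivative_eq_intros simp: algebra_simps)

lemma laurent_holomorphic: "laurent I c holomorphic_on UNIV - {0}"
  unfolding laurent_def by (intro holomorphic_intros) auto

lemma has_field_derivative_laurent_deriv_moving:
  assumes C: "\<And>n. n \<in> I \<Longrightarrow> ((\<lambda>s. C s n) has_field_derivative C' n) (at 0)"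
    and X: "(X has_field_derivative X') (at 0)" "X 0 \<noteq> 0"
  shows "((\<lambda>s. laurent_deriv I (C s) (X s)) has_field_derivative
            laurent_deriv I C' (X 0)
            + (\<Sum>n\<in>I. C 0 n * of_int n * of_int (n - 1) * X 0 powi (n - 2)) * X') (at 0)"
proof -
  have "((\<lambda>s. C s n * of_int n * X s powi (n - 1)) has_field_derivative
      C' n * of_int n * X 0 powi (n - 1) + C 0 n * of_int n * of_int (n - 1) * X 0 powi (n - 2) * X') (at 0)"
    if "n \<in> I" for n
    using C[OF that] X by (auto intro!: derivative_eq_intros simp: algebra_simps)
  then have "((\<lambda>s. \<Sum>n\<in>I. C s n * of_int n * X s powi (n - 1)) has_field_derivative
      (\<Sum>n\<in>I. C' n * of_int n * X 0 powi (n - 1) + C 0 n * of_int n * of_int (n - 1) * X 0 powi (n - 2) * X')) (at 0)"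
    by (rule DERIV_sum)
  then show ?thesis
    unfolding laurent_deriv_def by (simp add: sum.distrib sum_distrib_right)
qed

section \<open>The Laurent polynomial f_t\<close>

definition exponents :: "nat \<Rightarrow> nat \<Rightarrow> int set" where
  "exponents k m = {- int m..int k}"

definition fcoeff :: "nat \<Rightarrow> nat \<Rightarrow> complex \<Rightarrow> (nat \<Rightarrow> complex) \<Rightarrow> int \<Rightarrow> complex" where
  "fcoeff k m Q t n = (if n = int k then 1
     else if 0 \<le> n \<and> n < int k then t (nat (int k - n))
     else if - int m < n \<and> n < 0 then t (nat (int k - n)) * (Q * exp (t (k + m))) ^ nat (- n)
     else if n = - int m then (Q * exp (t (k + m))) ^ m else 0)"

definition dir_fcoeff ::
    "nat \<Rightarrow> nat \<Rightarrow> complex \<Rightarrow> (nat \<Rightarrow> complex) \<Rightarrow> (nat \<Rightarrow> complex) \<Rightarrow> int \<Rightarrow> complex" where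
  "dir_fcoeff k m Q t v n = (if n = int k then 0
     else if 0 \<le> n \<and> n < int k then v (nat (int k - n))
     else if - int m < n \<and> n < 0 then v (nat (int k - n)) * (Q * exp (t (k + m))) ^ nat (- n)
            + t (nat (int k - n)) * (of_nat (nat (- n)) * (Q * exp (t (k + m))) ^ nat (- n) * v (k + m))
     else if n = - int m then of_nat m * (Q * exp (t (k + m))) ^ m * v (k + m) else 0)"

lemma exponents_split:
  assumes "k \<ge> 1" "m \<ge> 1"
  shows "exponents k m =
    {int k} \<union> (\<lambda>i. int k - int i) ` {1..k} \<union> (\<lambda>j. - int j) ` {1..m-1} \<union> {- int m}"
proof (intro set_eqI iffI)
  fix n assume n: "n \<in> exponents k m"
  consider "n = int k \<or> n = - int m" | "0 \<le> n" "n \<noteq> int k" | "n < 0" "n \<noteq> - int m" by linarith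
  then show "n \<in> {int k} \<union> (\<lambda>i. int k - int i) ` {1..k} \<union> (\<lambda>j. - int j) ` {1..m-1} \<union> {- int m}"
  proof cases
    case 2
    then have "n \<in> (\<lambda>i. int k - int i) ` {1..k}"
      using n by (intro image_eqI[of _ _ "nat (int k - n)"]) (auto simp: exponents_def)
    then show ?thesis by blast
  next
    case 3
    then have "n \<in> (\<lambda>j. - int j) ` {1..m-1}"
      using n by (intro image_eqI[of _ _ "nat (- n)"]) (auto simp: exponents_def)
    then show ?thesis by blast
  qed auto
qed (use assms in \<open>auto simp: exponents_def\<close>)

lemma fL_eq_laurent:
  assumes k: "k \<ge> 1" and m: "m \<ge> 1" and x: "x \<noteq> 0"
  shows "fL k m Q t x = laurent (exponents k m) (fcoeff k m Q t) x"
proof -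
  define g where "g = (\<lambda>n. fcoeff k m Q t n * x powi n)"
  define A where "A = (\<lambda>i. int k - int i) ` {1..k}"
  define B where "B = (\<lambda>j. - int j) ` {1..m-1}"
  have disj: "{int k} \<inter> A = {}" "({int k} \<union> A) \<inter> B = {}" "({int k} \<union> A \<union> B) \<inter> {- int m} = {}"
    using k m by (auto simp: A_def B_def)
  have "laurent (exponents k m) (fcoeff k m Q t) x = g (int k) + sum g A + sum g B + g (- int m)"
    unfolding laurent_def g_def[symmetric] exponents_split[OF k m] A_def[symmetric] B_def[symmetric]
    using disj by (simp add: sum.union_disjoint A_def B_def)
  also have "g (int k) = x ^ k" by (simp add: g_def fcoeff_def)
  also have "sum g A = (\<Sum>i=1..k. t i * x ^ (k - i))"
    unfolding A_def
  proof (subst sum.reindex)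
    have "g (int k - int i) = t i * x ^ (k - i)" if "i \<in> {1..k}" for i
    proof -
      have "int k - int i = int (k - i)" using that by simp
      then have "x powi (int k - int i) = x ^ (k - i)" by (simp only: power_int_of_nat)
      then show ?thesis using that by (simp add: g_def fcoeff_def)
    qed
    then show "sum (g \<circ> (\<lambda>i. int k - int i)) {1..k} = (\<Sum>i = 1..k. t i * x ^ (k - i))"
      by (intro sum.cong) auto
  qed (auto simp: inj_on_def)
  also have "sum g B = (\<Sum>j=1..m-1. t (k + j) * (Q * exp (t (k + m)) / x) ^ j)"
    unfolding B_def
  proof (subst sum.reindex)
    have "g (- int j) = t (k + j) * (Q * exp (t (k + m)) / x) ^ j" if "j \<in> {1..m-1}" for j
    proof -
      have "x powi (- int j) = 1 / x ^ j" by (simp add: power_int_minus power_int_of_nat field_simps)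
      moreover have "nat (int k + int j) = k + j" "j < m" using that by auto
      ultimately show ?thesis using that by (simp add: g_def fcoeff_def power_divide)
    qed
    then show "sum (g \<circ> (\<lambda>j. - int j)) {1..m-1} = (\<Sum>j=1..m-1. t (k + j) * (Q * exp (t (k + m)) / x) ^ j)"
      by (intro sum.cong) auto
  qed (auto simp: inj_on_def)
  also have "g (- int m) = (Q * exp (t (k + m)) / x) ^ m"
  proof -
    have "x powi (- int m) = 1 / x ^ m" by (simp add: power_int_minus power_int_of_nat field_simps)
    then show ?thesis using k m by (simp add: g_def fcoeff_def power_divide)
  qed
  finally show ?thesis unfolding fL_def by simp
qed

lemma fcoeff_line_has_field_derivative:
  assumes m: "m \<ge> 1"
  shows "((\<lambda>s. fcoeff k m Q (shiftp t s v) n) has_field_derivative dir_fcoeff k m Q t v n) (at 0)"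
proof -
  have exp_pow: "((\<lambda>s. (Q * exp (t (k + m) + s * v (k + m))) ^ j) has_field_derivative
      of_nat j * (Q * exp (t (k + m))) ^ j * v (k + m)) (at 0)" for j
  proof -
    have "((\<lambda>s. (Q * exp (t (k + m) + s * v (k + m))) ^ j) has_field_derivative
        of_nat j * (Q * exp (t (k + m))) ^ (j - 1) * (Q * exp (t (k + m)) * v (k + m))) (at 0)"
      by (auto intro!: derivative_eq_intros)
    then show ?thesis by (cases j) (simp_all add: algebra_simps)
  qed
  consider "n = int k" | "n \<noteq> int k" "0 \<le> n" "n < int k"
    | "- int m < n" "n < 0" | "n = - int m" | "n \<notin> exponents k m"
    using m by (force simp: exponents_def)
  then show ?thesis
  proof cases
    case 3
    define i where "i = nat (int k - n)"
    define j where "j = nat (- n)"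
    have "((\<lambda>s. t i + s * v i) has_field_derivative v i) (at 0)"
      by (auto intro!: derivative_eq_intros)
    from DERIV_mult[OF this exp_pow[of j]]
    have "((\<lambda>s. (t i + s * v i) * (Q * exp (t (k + m) + s * v (k + m))) ^ j) has_field_derivative
        v i * (Q * exp (t (k + m))) ^ j + t i * (of_nat j * (Q * exp (t (k + m))) ^ j * v (k + m))) (at 0)"
      by (simp add: ac_simps)
    then show ?thesis using 3 by (simp add: fcoeff_def dir_fcoeff_def shiftp_def i_def j_def)
  next
    case 4
    then show ?thesis using m exp_pow[of m] by (simp add: fcoeff_def dir_fcoeff_def shiftp_def)
  next
    case 2
    have "((\<lambda>s. t (nat (int k - n)) + s * v (nat (int k - n))) has_field_derivative v (nat (int k - n))) (at 0)"
      by (auto intro!: derivative_eq_intros)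
    then show ?thesis using 2 by (simp add: fcoeff_def dir_fcoeff_def shiftp_def)
  next
    case 5
    then have "fcoeff k m Q (shiftp t s v) n = 0" "dir_fcoeff k m Q t v n = 0" for s
      by (auto simp: fcoeff_def dir_fcoeff_def exponents_def)
    then show ?thesis by simp
  qed (simp add: fcoeff_def dir_fcoeff_def)
qed

lemma dirf_eq_laurent:
  assumes "k \<ge> 1" "m \<ge> 1" "x \<noteq> 0"
  shows "dirf k m Q t v x = laurent (exponents k m) (dir_fcoeff k m Q t v) x"
proof -
  have "((\<lambda>s. \<Sum>n\<in>exponents k m. fcoeff k m Q (shiftp t s v) n * x powi n) has_field_derivative
      (\<Sum>n\<in>exponents k m. dir_fcoeff k m Q t v n * x powi n)) (at 0)"
  proof (rule DERIV_sum)
    fix n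
    show "((\<lambda>s. fcoeff k m Q (shiftp t s v) n * x powi n) has_field_derivative
        dir_fcoeff k m Q t v n * x powi n) (at 0)"
      using DERIV_mult[OF fcoeff_line_has_field_derivative[OF assms(2)] DERIV_const[of "x powi n"]]
      by simp
  qed
  then show ?thesis
    unfolding dirf_def Dir_def fL_eq_laurent[OF assms] laurent_def by (rule DERIV_imp_deriv)
qed

lemma laurent_deriv_holomorphic: "laurent_deriv I c holomorphic_on UNIV - {0}"
  unfolding laurent_deriv_def by (intro holomorphic_intros) auto

lemma fL_holomorphic: "k \<ge> 1 \<Longrightarrow> m \<ge> 1 \<Longrightarrow> fL k m Q t holomorphic_on UNIV - {0}"
  using laurent_holomorphic by (rule holomorphic_transform) (simp add: fL_eq_laurent)

lemma dirf_holomorphic: "k \<ge> 1 \<Longrightarrow> m \<ge> 1 \<Longrightarrow> dirf k m Q t v holomorphic_on UNIV - {0}"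
  using laurent_holomorphic by (rule holomorphic_transform) (simp add: dirf_eq_laurent)

lemma has_field_derivative_transform_off_0:
  assumes "(g has_field_derivative D) (at x)" "x \<noteq> 0" "\<And>y. y \<noteq> 0 \<Longrightarrow> g y = f y"
  shows "(f has_field_derivative D) (at x)"
  by (rule has_field_derivative_transform_within_open[OF assms(1), of "UNIV - {0}"])
     (use assms(2,3) in \<open>simp_all add: open_delete\<close>)

lemma fprime_eq_laurent_deriv:
  assumes "k \<ge> 1" "m \<ge> 1" "x \<noteq> 0"
  shows "fprime k m Q t x = laurent_deriv (exponents k m) (fcoeff k m Q t) x"
  unfolding fprime_def
  by (intro DERIV_imp_deriv has_field_derivative_transform_off_0[OF has_field_derivative_laurent[OF assms(3)] assms(3)])
     (simp add: fL_eq_laurent[OF assms(1,2)])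

lemma fprime_holomorphic: "k \<ge> 1 \<Longrightarrow> m \<ge> 1 \<Longrightarrow> fprime k m Q t holomorphic_on UNIV - {0}"
  using laurent_deriv_holomorphic by (rule holomorphic_transform) (simp add: fprime_eq_laurent_deriv)

lemma deriv_dirf:
  assumes "k \<ge> 1" "m \<ge> 1" "x \<noteq> 0"
  shows "deriv (dirf k m Q t v) x = laurent_deriv (exponents k m) (dir_fcoeff k m Q t v) x"
  by (intro DERIV_imp_deriv has_field_derivative_transform_off_0[OF has_field_derivative_laurent[OF assms(3)] assms(3)])
     (simp add: dirf_eq_laurent[OF assms(1,2)])

lemma deriv_fprime:
  assumes "k \<ge> 1" "m \<ge> 1" "x \<noteq> 0"
  shows "deriv (fprime k m Q t) x =
    (\<Sum>n\<in>exponents k m. fcoeff k m Q t n * of_int n * of_int (n - 1) * x powi (n - 2))"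
  by (intro DERIV_imp_deriv
        has_field_derivative_transform_off_0[OF has_field_derivative_laurent_deriv[OF assms(3)] assms(3)])
     (simp add: fprime_eq_laurent_deriv[OF assms(1,2)])

section \<open>Numerator polynomials and the residue pairing\<close>

definition laurent_numerator :: "nat \<Rightarrow> nat \<Rightarrow> (int \<Rightarrow> complex) \<Rightarrow> complex poly" where
  "laurent_numerator k m c = (\<Sum>n\<in>exponents k m. monom (c n) (nat (n + int m)))"

lemma laurent_eq_numerator:
  assumes x: "x \<noteq> 0"
  shows "laurent (exponents k m) c x = poly (laurent_numerator k m c) x / x ^ m"
proof -
  have "c n * x powi n = poly (monom (c n) (nat (n + int m))) x / x ^ m" if "n \<in> exponents k m" for n
  proof -
    have nn: "int (nat (n + int m)) = n + int m" using that by (simp add: exponents_def)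
    have "x ^ nat (n + int m) = x powi (int (nat (n + int m)))" by (simp only: power_int_of_nat)
    also have "\<dots> = x powi (n + int m)" by (simp only: nn)
    also have "\<dots> = x powi n * x ^ m" using x by (simp add: power_int_add)
    finally show ?thesis using x by (simp add: poly_monom)
  qed
  then show ?thesis
    unfolding laurent_def laurent_numerator_def poly_sum sum_divide_distrib by (rule sum.cong[OF refl])
qed

lemma laurent_deriv_eq_numerator:
  assumes x: "x \<noteq> 0"
  shows "laurent_deriv (exponents k m) c x =
           poly (laurent_numerator k m (\<lambda>n. c n * of_int n)) x / x ^ (m + 1)"
proof -
  have "laurent_deriv (exponents k m) c x = laurent (exponents k m) (\<lambda>n. c n * of_int n) x / x"
    unfolding laurent_deriv_def laurent_def sum_divide_distrib
    by (intro sum.cong refl) (use x in \<open>simp add: power_int_diff\<close>)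
  then show ?thesis using x by (simp add: laurent_eq_numerator)
qed

lemma coeff_laurent_numerator:
  "coeff (laurent_numerator k m c) j = (if j \<le> k + m then c (int j - int m) else 0)"
proof -
  have "coeff (laurent_numerator k m c) j = (\<Sum>n\<in>exponents k m. if n = int j - int m then c n else 0)"
    unfolding laurent_numerator_def coeff_sum coeff_monom
    by (intro sum.cong refl) (auto simp: exponents_def)
  also have "\<dots> = (if int j - int m \<in> exponents k m then c (int j - int m) else 0)"
    by (rule sum.delta) (simp add: exponents_def)
  finally show ?thesis by (simp add: exponents_def)
qed

definition fprime_numerator :: "nat \<Rightarrow> nat \<Rightarrow> complex \<Rightarrow> (nat \<Rightarrow> complex) \<Rightarrow> complex poly" where
  "fprime_numerator k m Q t = laurent_numerator k m (\<lambda>n. fcoeff k m Q t n * of_int n)"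

definition dirf_numerator ::
    "nat \<Rightarrow> nat \<Rightarrow> complex \<Rightarrow> (nat \<Rightarrow> complex) \<Rightarrow> (nat \<Rightarrow> complex) \<Rightarrow> complex poly" where
  "dirf_numerator k m Q t v = laurent_numerator k m (dir_fcoeff k m Q t v)"

lemma dirf_eq_numerator:
  assumes "k \<ge> 1" "m \<ge> 1" "x \<noteq> 0"
  shows "dirf k m Q t v x = poly (dirf_numerator k m Q t v) x / x ^ m"
  using assms by (simp add: dirf_eq_laurent laurent_eq_numerator dirf_numerator_def)

lemma fprime_eq_numerator:
  assumes "k \<ge> 1" "m \<ge> 1" "x \<noteq> 0"
  shows "fprime k m Q t x = poly (fprime_numerator k m Q t) x / x ^ (m + 1)"
  using assms by (simp add: fprime_eq_laurent_deriv laurent_deriv_eq_numerator fprime_numerator_def)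

lemma degree_fprime_numerator:
  assumes "k \<ge> 1" "m \<ge> 1"
  shows "degree (fprime_numerator k m Q t) = k + m"
proof (rule antisym)
  show "degree (fprime_numerator k m Q t) \<le> k + m"
    by (rule degree_le) (simp add: fprime_numerator_def coeff_laurent_numerator)
  have "coeff (fprime_numerator k m Q t) (k + m) = of_nat k"
    by (simp add: fprime_numerator_def coeff_laurent_numerator fcoeff_def)
  then show "k + m \<le> degree (fprime_numerator k m Q t)"
    using assms by (intro le_degree) simp
qed

lemma poly_fprime_numerator_0:
  assumes "k \<ge> 1" "m \<ge> 1" "Q \<noteq> 0"
  shows "poly (fprime_numerator k m Q t) 0 \<noteq> 0"
proof -
  have "poly (fprime_numerator k m Q t) 0 = fcoeff k m Q t (- int m) * of_int (- int m)"
    by (simp add: poly_0_coeff_0 fprime_numerator_def coeff_laurent_numerator)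
  also have "fcoeff k m Q t (- int m) = (Q * exp (t (k + m))) ^ m"
    using assms by (simp add: fcoeff_def)
  finally show ?thesis using assms by simp
qed

lemma fprime_numerator_nonzero:
  "k \<ge> 1 \<Longrightarrow> m \<ge> 1 \<Longrightarrow> Q \<noteq> 0 \<Longrightarrow> fprime_numerator k m Q t \<noteq> 0"
  using poly_fprime_numerator_0[of k m Q t] by auto

lemma degree_dirf_numerator:
  assumes "k \<ge> 1" "m \<ge> 1"
  shows "degree (dirf_numerator k m Q t v) < k + m"
proof -
  have "degree (dirf_numerator k m Q t v) \<le> k + m - 1"
  proof (intro degree_le allI impI)
    fix i assume "k + m - 1 < i"
    then show "coeff (dirf_numerator k m Q t v) i = 0"
      using assms by (cases "i = k + m") (auto simp: dirf_numerator_def coeff_laurent_numerator dir_fcoeff_def)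
  qed
  then show ?thesis using assms by simp
qed

lemma dirf_numerator_surj:
  assumes k: "k \<ge> 1" and m: "m \<ge> 1" and Q: "Q \<noteq> 0" and P: "degree P < k + m"
  obtains v where "tangent (k + m) v" "dirf_numerator k m Q t v = P"
proof -
  define q where "q = Q * exp (t (k + m))"
  have q0: "q \<noteq> 0" using Q by (simp add: q_def)
  define vN where "vN = coeff P 0 / (of_nat m * q ^ m)"
  define v where "v = (\<lambda>i. if 1 \<le> i \<and> i \<le> k then coeff P (k + m - i)
     else if k < i \<and> i < k + m then (coeff P (k + m - i) - t i * (of_nat (i - k) * q ^ (i - k) * vN)) / q ^ (i - k)
     else if i = k + m then vN else 0)"
  have vN: "v (k + m) = vN" using m by (simp add: v_def)
  have "coeff (dirf_numerator k m Q t v) j = coeff P j" for j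
  proof (cases "j \<le> k + m")
    case False
    then show ?thesis using P by (simp add: dirf_numerator_def coeff_laurent_numerator coeff_eq_0)
  next
    case True
    then have coeff_eq: "coeff (dirf_numerator k m Q t v) j = dir_fcoeff k m Q t v (int j - int m)"
      by (simp add: dirf_numerator_def coeff_laurent_numerator)
    consider "j = k + m" | "m \<le> j" "j < k + m" | "0 < j" "j < m" | "j = 0"
      using True by linarith
    then show ?thesis
    proof cases
      case 1
      then show ?thesis using coeff_eq P by (simp add: dir_fcoeff_def coeff_eq_0)
    next
      case 2
      then have "nat (int k - (int j - int m)) = k + m - j" "1 \<le> k + m - j" "k + m - j \<le> k"
          "k + m - (k + m - j) = j"
        by auto
      then show ?thesis using 2 coeff_eq by (simp add: dir_fcoeff_def v_def)
    next
      case 3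
      define i where "i = k + m - j"
      have "nat (int k - (int j - int m)) = i" "nat (- (int j - int m)) = i - k"
        "nat (int m - int j) = i - k" "(of_nat m - of_nat j :: complex) = of_nat (i - k)"
        "k < i" "i < k + m" "k + m - i = j"
        using 3 by (auto simp: i_def of_nat_diff)
      then show ?thesis
        using 3 k q0 coeff_eq by (simp add: dir_fcoeff_def q_def vN v_def field_simps)
    next
      case 4
      then show ?thesis using k m q0 coeff_eq by (simp add: dir_fcoeff_def q_def vN vN_def)
    qed
  qed
  then have "dirf_numerator k m Q t v = P" by (rule poly_eqI)
  moreover have "tangent (k + m) v" unfolding tangent_def v_def using k by auto
  ultimately show thesis by (rule that[rotated])
qed

definition pair_denominator :: "nat \<Rightarrow> nat \<Rightarrow> complex \<Rightarrow> (nat \<Rightarrow> complex) \<Rightarrow> complex poly" where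
  "pair_denominator k m Q t = monom 1 (m + 1) * fprime_numerator k m Q t"

definition poly_pair :: "nat \<Rightarrow> nat \<Rightarrow> complex \<Rightarrow> (nat \<Rightarrow> complex) \<Rightarrow> complex poly \<Rightarrow> complex" where
  "poly_pair k m Q t P = - res_0_inf (\<lambda>x. poly P x / poly (pair_denominator k m Q t) x)"

lemma pair_eq_poly_pair:
  assumes "k \<ge> 1" "m \<ge> 1"
  shows "pair k m Q t v w = poly_pair k m Q t (dirf_numerator k m Q t v * dirf_numerator k m Q t w)"
proof -
  have "res_0_inf (\<lambda>x. dirf k m Q t v x * dirf k m Q t w x / (x ^ 2 * fprime k m Q t x)) =
      res_0_inf (\<lambda>x. poly (dirf_numerator k m Q t v * dirf_numerator k m Q t w) x /
                     poly (pair_denominator k m Q t) x)"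
  proof (rule res_0_inf_cong[of "{0}"])
    fix x :: complex assume "x \<notin> {0}"
    then show "dirf k m Q t v x * dirf k m Q t w x / (x ^ 2 * fprime k m Q t x) =
      poly (dirf_numerator k m Q t v * dirf_numerator k m Q t w) x / poly (pair_denominator k m Q t) x"
      using assms
      by (cases "poly (fprime_numerator k m Q t) x = 0")
         (simp_all add: dirf_eq_numerator fprime_eq_numerator pair_denominator_def poly_monom
           field_simps power_add power2_eq_square)
  qed simp
  then show ?thesis unfolding pair_def poly_pair_def Let_def res_0_inf_def by simp
qed

lemma poly_pair_diff:
  assumes "k \<ge> 1" "m \<ge> 1" "Q \<noteq> 0"
  shows "poly_pair k m Q t (P1 - P2) = poly_pair k m Q t P1 - poly_pair k m Q t P2"
proof -
  have D: "pair_denominator k m Q t \<noteq> 0"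
    using fprime_numerator_nonzero[OF assms] by (simp add: pair_denominator_def)
  show ?thesis
    unfolding poly_pair_def
    using res_0_inf_diff[OF finitely_singular_rational[OF D, of P1] finitely_singular_rational[OF D, of P2]]
    by (simp add: diff_divide_distrib)
qed

(* For c \<noteq> 0 the division is exact, as the numerator vanishes at c. *)
definition kernel_poly :: "nat \<Rightarrow> nat \<Rightarrow> complex \<Rightarrow> (nat \<Rightarrow> complex) \<Rightarrow> complex \<Rightarrow> complex poly" where
  "kernel_poly k m Q t c = smult (1 / fprime k m Q t c)
     ((fprime_numerator k m Q t - smult (fprime k m Q t c) (monom 1 (m + 1))) div [:-c, 1:])"

lemma kernel_poly:
  assumes k: "k \<ge> 1" and m: "m \<ge> 1" and c: "c \<noteq> 0" and fc: "fprime k m Q t c \<noteq> 0"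
  shows "\<And>x. x \<noteq> c \<Longrightarrow> poly (kernel_poly k m Q t c) x =
           (poly (fprime_numerator k m Q t) x - fprime k m Q t c * x ^ (m + 1)) / ((x - c) * fprime k m Q t c)"
    and "degree (kernel_poly k m Q t c) < k + m"
proof -
  define N where "N = fprime_numerator k m Q t - smult (fprime k m Q t c) (monom 1 (m + 1))"
  have "poly N c = 0"
    using fprime_eq_numerator[OF k m c, of Q t] c by (simp add: N_def poly_monom field_simps)
  then have "[:-c, 1:] dvd N" by (simp add: poly_eq_0_iff_dvd)
  then have N: "N = [:-c, 1:] * (N div [:-c, 1:])" by (rule dvd_mult_div_cancel[symmetric])
  have kernel: "kernel_poly k m Q t c = smult (1 / fprime k m Q t c) (N div [:-c, 1:])"
    by (simp add: kernel_poly_def N_def)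
  show "poly (kernel_poly k m Q t c) x =
      (poly (fprime_numerator k m Q t) x - fprime k m Q t c * x ^ (m + 1)) / ((x - c) * fprime k m Q t c)"
    if "x \<noteq> c" for x
  proof -
    have "poly N x = (x - c) * poly (N div [:-c, 1:]) x" by (subst N) (simp add: algebra_simps)
    then have "poly (kernel_poly k m Q t c) x = poly N x / ((x - c) * fprime k m Q t c)"
      using that by (simp add: kernel)
    then show ?thesis by (simp add: N_def poly_monom)
  qed
  have "degree N \<le> k + m"
    unfolding N_def using degree_fprime_numerator[OF k m, of Q t] k m
    by (intro degree_diff_le) (auto simp: degree_monom_eq)
  moreover have "degree N = 1 + degree (N div [:-c, 1:])" if "N div [:-c, 1:] \<noteq> 0"
    using that by (subst N, subst degree_mult_eq) auto
  ultimately show "degree (kernel_poly k m Q t c) < k + m"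
    unfolding kernel using k by (cases "N div [:-c, 1:] = 0") auto
qed

lemma poly_pair_kernel:
  assumes k: "k \<ge> 1" and m: "m \<ge> 1" and Q: "Q \<noteq> 0" and c: "c \<noteq> 0"
    and fc: "fprime k m Q t c \<noteq> 0" and P: "degree P < k + m"
  shows "poly_pair k m Q t (kernel_poly k m Q t c * P) = poly P c / (c ^ (m + 1) * fprime k m Q t c)"
proof -
  define F where "F = fprime_numerator k m Q t"
  define phi where "phi = (\<lambda>x. poly P x / (fprime k m Q t c * x ^ (m + 1)))"
  have F: "F \<noteq> 0" "poly F 0 \<noteq> 0" "degree F = k + m"
    using fprime_numerator_nonzero[OF k m Q] poly_fprime_numerator_0[OF k m Q] degree_fprime_numerator[OF k m]
    by (simp_all add: F_def)
  have cF: "[:-c, 1:] * F \<noteq> 0" using F(1) by (simp only: mult_eq_0_iff) simp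
  have phi: "phi holomorphic_on UNIV - {0}"
    unfolding phi_def using fc by (intro holomorphic_intros) auto
  have "res_0_inf (\<lambda>x. poly (kernel_poly k m Q t c * P) x / poly (pair_denominator k m Q t) x) =
      res_0_inf (\<lambda>x. phi x / (x - c) - poly P x / poly ([:-c, 1:] * F) x)"
  proof (rule res_0_inf_cong[of "{0, c} \<union> {x. poly F x = 0}"])
    show "finite ({0, c} \<union> {x. poly F x = 0})" using poly_roots_finite[OF F(1)] by simp
    fix x assume "x \<notin> {0, c} \<union> {x. poly F x = 0}"
    then have x: "x \<noteq> 0" "x - c \<noteq> 0" "poly F x \<noteq> 0" by auto
    define y where "y = x ^ m"
    have "y \<noteq> 0" using x by (simp add: y_def)
    have "poly (kernel_poly k m Q t c * P) x / poly (pair_denominator k m Q t) x =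
        (poly F x - fprime k m Q t c * (x * y)) / ((x - c) * fprime k m Q t c) * poly P x / (x * y * poly F x)"
      using x by (simp add: kernel_poly(1)[OF k m c fc] pair_denominator_def poly_monom F_def y_def)
    also have "\<dots> = poly P x / (fprime k m Q t c * (x * y)) / (x - c) - poly P x / ((x - c) * poly F x)"
    proof -
      have "(F' - f * z) / (d * f) * p / (z * F') = p / (f * z) / d - p / (d * F')"
        if "d \<noteq> 0" "F' \<noteq> 0" "f \<noteq> 0" "z \<noteq> 0" for F' f d p z :: complex
        using that by (simp add: field_simps)
      then show ?thesis using x fc \<open>y \<noteq> 0\<close> by simp
    qed
    finally show "poly (kernel_poly k m Q t c * P) x / poly (pair_denominator k m Q t) x =
        phi x / (x - c) - poly P x / poly ([:-c, 1:] * F) x"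
      by (simp add: phi_def y_def algebra_simps)
  qed
  also have "\<dots> = - phi c"
  proof -
    have "finitely_singular (\<lambda>x. phi x / (x - c))"
      unfolding finitely_singular_def
      by (intro exI[of _ "{0, c}"] conjI holomorphic_intros holomorphic_on_subset[OF phi]) auto
    moreover have "res_0_inf (\<lambda>x. poly P x / poly ([:-c, 1:] * F) x) = 0"
    proof (rule res_0_inf_rational)
      have "degree ([:-c, 1:] * F) = 1 + (k + m)"
        using degree_mult_eq[of "[:-c, 1:]" F] F by simp
      then show "degree P + 2 \<le> degree ([:-c, 1:] * F)" using P by simp
    qed (use c F in simp)
    ultimately show ?thesis
      using res_0_inf_diff[OF _ finitely_singular_rational[OF cF]] res_0_inf_simple_pole[OF c phi]
      by simp
  qed
  finally show ?thesis by (simp add: poly_pair_def phi_def mult.commute)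
qed

lemma poly_pair_nondegenerate:
  assumes k: "k \<ge> 1" and m: "m \<ge> 1" and Q: "Q \<noteq> 0" and Phi: "degree Phi < k + m"
    and orth: "\<And>P. degree P < k + m \<Longrightarrow> poly_pair k m Q t (Phi * P) = 0"
  shows "Phi = 0"
proof (rule ccontr)
  assume "Phi \<noteq> 0"
  define F where "F = fprime_numerator k m Q t"
  have "UNIV - ({0} \<union> {x. poly F x = 0}) \<subseteq> {x. poly Phi x = 0}"
  proof
    fix c assume "c \<in> UNIV - ({0} \<union> {x. poly F x = 0})"
    then have c: "c \<noteq> 0" and fc: "fprime k m Q t c \<noteq> 0"
      by (auto simp: fprime_eq_numerator[OF k m] F_def)
    have "poly_pair k m Q t (kernel_poly k m Q t c * Phi) = 0"
      using orth[OF kernel_poly(2)[OF k m c fc]] by (simp add: mult.commute)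
    then show "c \<in> {x. poly Phi x = 0}"
      using poly_pair_kernel[OF k m Q c fc Phi] c fc by simp
  qed
  moreover have "finite {x. poly Phi x = 0}" "finite ({0} \<union> {x. poly F x = 0})"
    using poly_roots_finite \<open>Phi \<noteq> 0\<close> fprime_numerator_nonzero[OF k m Q] by (auto simp: F_def)
  ultimately show False
    by (metis finite_Diff2 finite_subset infinite_UNIV_char_0)
qed

lemma dirf_numerator_eq_kernel_poly:
  assumes k: "k \<ge> 1" and m: "m \<ge> 1" and Q: "Q \<noteq> 0" and a: "a \<noteq> 0"
    and fa: "fprime k m Q t a \<noteq> 0"
    and reproduces: "\<And>w. tangent (k + m) w \<Longrightarrow>
         pair k m Q t A w = poly (dirf_numerator k m Q t w) a / (a ^ (m + 1) * fprime k m Q t a)"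
  shows "dirf_numerator k m Q t A = kernel_poly k m Q t a"
proof -
  define Phi where "Phi = dirf_numerator k m Q t A - kernel_poly k m Q t a"
  have "degree Phi < k + m"
    using degree_dirf_numerator[OF k m, of Q t A] kernel_poly(2)[OF k m a fa] degree_diff_le_max[of
        "dirf_numerator k m Q t A" "kernel_poly k m Q t a"]
    by (simp add: Phi_def)
  moreover have "poly_pair k m Q t (Phi * P) = 0" if P: "degree P < k + m" for P
  proof -
    obtain w where w: "tangent (k + m) w" "dirf_numerator k m Q t w = P"
      using dirf_numerator_surj[OF k m Q P] by blast
    show ?thesis
      using reproduces[OF w(1)] poly_pair_kernel[OF k m Q a fa P] w(2)
      by (simp add: Phi_def left_diff_distrib poly_pair_diff[OF k m Q] pair_eq_poly_pair[OF k m])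
  qed
  ultimately have "Phi = 0" by (rule poly_pair_nondegenerate[OF k m Q])
  then show ?thesis by (simp add: Phi_def)
qed

section \<open>One-point cycles\<close>

lemma shiftp_0 [simp]: "shiftp t 0 v = t"
  by (simp add: shiftp_def)

lemma shiftp_in_nbhd:
  assumes v: "tangent N v" and r: "r > 0"
  obtains d where "d > 0" "\<And>s. norm s < d \<Longrightarrow> shiftp t s v \<in> nbhd N t r"
proof
  define M where "M = (\<Sum>i\<in>{1..N}. norm (v i)) + 1"
  have "0 \<le> (\<Sum>i\<in>{1..N}. norm (v i))" by (intro sum_nonneg) simp
  then have M0: "M > 0" unfolding M_def by linarith
  have M: "norm (v i) \<le> M" if "i \<in> {1..N}" for i
  proof -
    have "norm (v i) \<le> (\<Sum>i\<in>{1..N}. norm (v i))" using that by (intro member_le_sum) auto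
    then show ?thesis unfolding M_def by linarith
  qed
  show "r / M > 0" using r M0 by simp
  show "shiftp t s v \<in> nbhd N t r" if s: "norm s < r / M" for s
    unfolding nbhd_def
  proof (intro CollectI conjI ballI allI impI)
    fix i assume i: "i \<in> {1..N}"
    have "norm (s * v i) \<le> norm s * M" unfolding norm_mult using M[OF i] by (rule mult_left_mono) simp
    also have "\<dots> < r / M * M" using s M0 by (rule mult_strict_right_mono)
    also have "\<dots> = r" using M0 by simp
    finally show "cmod (shiftp t s v i - t i) < r" by (simp add: shiftp_def)
  next
    fix i assume "i \<notin> {1..N}"
    then show "shiftp t s v i = t i" using v by (simp add: shiftp_def tangent_def)
  qed
qed

lemma eventually_shiftp_in_nbhd:
  assumes "tangent N v" "r > 0"
  shows "eventually (\<lambda>s. shiftp t s v \<in> nbhd N t r) (nhds 0)"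
proof -
  obtain d where "d > 0" "\<And>s. norm s < d \<Longrightarrow> shiftp t s v \<in> nbhd N t r"
    using shiftp_in_nbhd[OF assms] by blast
  then show ?thesis unfolding eventually_nhds by (intro exI[of _ "ball 0 d"]) auto
qed

lemma isCont_analyticML_line:
  assumes "analyticML N F t lam" and v: "tangent N v"
  shows "isCont (\<lambda>s. F (shiftp t s v) lam) 0"
proof -
  obtain r where r: "r > 0" and F: "continuous_on (nbhd N t r \<times> ball lam r) (\<lambda>(t', l). F t' l)"
    using assms(1) unfolding analyticML_def by blast
  obtain d where d: "d > 0" "\<And>s. norm s < d \<Longrightarrow> shiftp t s v \<in> nbhd N t r"
    using shiftp_in_nbhd[OF v r] by blast
  have "continuous_on (ball 0 d) (\<lambda>s. (shiftp t s v, lam))"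
    unfolding shiftp_def by (intro continuous_intros continuous_on_coordinatewise_then_product)
  moreover have "(\<lambda>s. (shiftp t s v, lam)) ` ball 0 d \<subseteq> nbhd N t r \<times> ball lam r"
    using d r by auto
  ultimately have "continuous_on (ball 0 d) (\<lambda>s. F (shiftp t s v) lam)"
    using continuous_on_compose2[OF F] by fastforce
  then show ?thesis using d(1) continuous_on_eq_continuous_at[of "ball 0 d"] by force
qed

lemma eventually_one_point_cycle_line:
  assumes "one_point_cycle k m Q t lam X L" "tangent (k + m) v"
  shows "eventually (\<lambda>s. fL k m Q (shiftp t s v) (X (shiftp t s v) lam) = lam \<and>
            exp (L (shiftp t s v) lam) = X (shiftp t s v) lam) (nhds 0)"
proof -
  obtain r where "r > 0" and eqs: "\<forall>t'\<in>nbhd (k + m) t r. \<forall>l\<in>ball lam r.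
        fL k m Q t' (X t' l) = l \<and> exp (L t' l) = X t' l"
    using assms(1) unfolding one_point_cycle_def by blast
  have "lam \<in> ball lam r" using \<open>r > 0\<close> by simp
  with eqs show ?thesis
    using eventually_shiftp_in_nbhd[OF assms(2) \<open>r > 0\<close>, of t] by (auto elim: eventually_mono)
qed

lemma one_point_cycle_at_base:
  assumes "one_point_cycle k m Q t lam X L"
  shows "exp (L t lam) = X t lam" "X t lam \<noteq> 0"
proof -
  have "tangent (k + m) (\<lambda>_. 0)" by (simp add: tangent_def)
  from eventually_nhds_x_imp_x[OF eventually_one_point_cycle_line[OF assms this]]
  show "exp (L t lam) = X t lam" by simp
  then show "X t lam \<noteq> 0" by (metis exp_not_eq_zero)
qed

lemma one_point_cycle_fprime_nonzero:
  assumes k: "k \<ge> 1" and m: "m \<ge> 1" and cycle: "one_point_cycle k m Q t lam X L"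
  shows "fprime k m Q t (X t lam) \<noteq> 0"
proof -
  obtain r where r: "r > 0" and eqs: "\<forall>t'\<in>nbhd (k + m) t r. \<forall>l\<in>ball lam r.
        fL k m Q t' (X t' l) = l \<and> exp (L t' l) = X t' l"
    using cycle unfolding one_point_cycle_def by blast
  obtain r' where r': "r' > 0" and diff: "\<forall>t'\<in>nbhd (k + m) t r'. \<forall>l\<in>ball lam r'.
        (\<forall>i\<in>{1..k+m}. (\<lambda>z. X (t'(i := z)) l) field_differentiable at (t' i)) \<and>
        (\<lambda>z. X t' z) field_differentiable at l"
    using cycle unfolding one_point_cycle_def analyticML_def by blast
  have "(\<lambda>z. X t z) field_differentiable at lam" using diff r' by (simp add: nbhd_def)
  then obtain X' where X': "((\<lambda>l. X t l) has_field_derivative X') (at lam)"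
    unfolding field_differentiable_def by blast
  have "(fL k m Q t has_field_derivative fprime k m Q t (X t lam)) (at (X t lam))"
    unfolding fprime_def using one_point_cycle_at_base(2)[OF cycle]
    by (intro holomorphic_derivI[OF fL_holomorphic[OF k m] open_delete[OF open_UNIV]]) simp
  from DERIV_chain2[OF this X']
  have "((\<lambda>l. l) has_field_derivative fprime k m Q t (X t lam) * X') (at lam)"
    by (rule has_field_derivative_transform_within_open[of _ _ _ "ball lam r"])
       (use eqs r in \<open>simp_all add: nbhd_def\<close>)
  then have "fprime k m Q t (X t lam) * X' = 1" by (rule DERIV_unique[OF _ DERIV_ident])
  then show ?thesis by auto
qed

lemma one_point_cycle_line_has_field_derivative:
  assumes k: "k \<ge> 1" and m: "m \<ge> 1" and cycle: "one_point_cycle k m Q t lam X L"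
    and v: "tangent (k + m) v"
  shows "((\<lambda>s. X (shiftp t s v) lam) has_field_derivative
           - dirf k m Q t v (X t lam) / fprime k m Q t (X t lam)) (at 0)"
proof -
  define I where "I = exponents k m"
  define C where "C = (\<lambda>s. fcoeff k m Q (shiftp t s v))"
  define Y where "Y = (\<lambda>s. X (shiftp t s v) lam)"
  have Y0: "Y 0 = X t lam" "Y 0 \<noteq> 0" using one_point_cycle_at_base(2)[OF cycle] by (simp_all add: Y_def)
  have Y: "isCont Y 0"
    unfolding Y_def using cycle v by (intro isCont_analyticML_line) (auto simp: one_point_cycle_def)
  \<comment> \<open>Only separate holomorphy of X is assumed, so Y is differentiated implicitly from
     f_t (Y s) = h s; h is differentiable because the coefficient differences vanish at s = 0.\<close>
  define h where "h = (\<lambda>s. lam - (\<Sum>n\<in>I. (C s n - C 0 n) * Y s powi n))"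
  have "((\<lambda>s. (C s n - C 0 n) * Y s powi n) has_field_derivative dir_fcoeff k m Q t v n * Y 0 powi n) (at 0)"
    for n
  proof (rule has_field_derivative_mult_vanishing)
    show "((\<lambda>s. C s n - C 0 n) has_field_derivative dir_fcoeff k m Q t v n) (at 0)"
      unfolding C_def using fcoeff_line_has_field_derivative[OF m] by (auto intro!: derivative_eq_intros)
    show "isCont (\<lambda>s. Y s powi n) 0" using Y Y0 by (intro continuous_intros) auto
  qed simp
  then have "((\<lambda>s. \<Sum>n\<in>I. (C s n - C 0 n) * Y s powi n) has_field_derivative
      laurent I (dir_fcoeff k m Q t v) (Y 0)) (at 0)"
    unfolding laurent_def by (rule DERIV_sum)
  then have "(h has_field_derivative - laurent I (dir_fcoeff k m Q t v) (Y 0)) (at 0)"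
    unfolding h_def using DERIV_diff[OF DERIV_const[of lam]] by fastforce
  moreover have "eventually (\<lambda>s. laurent I (C 0) (Y s) = h s) (nhds 0)"
    using eventually_one_point_cycle_line[OF cycle v]
  proof eventually_elim
    case (elim s)
    then have "Y s \<noteq> 0" by (metis Y_def exp_not_eq_zero)
    then have "laurent I (C s) (Y s) = lam"
      using elim fL_eq_laurent[OF k m, symmetric] by (simp add: Y_def C_def I_def)
    then show ?case by (simp add: h_def laurent_def sum_subtractf algebra_simps)
  qed
  moreover have "(laurent I (C 0) has_field_derivative fprime k m Q t (X t lam)) (at (Y 0))"
    using has_field_derivative_laurent[OF Y0(2)] Y0
    by (simp add: C_def I_def fprime_eq_laurent_deriv[OF k m])
  ultimately have "(Y has_field_derivative - laurent I (dir_fcoeff k m Q t v) (Y 0) / fprime k m Q t (X t lam)) (at 0)"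
    using one_point_cycle_fprime_nonzero[OF k m cycle] Y
    by (intro has_field_derivative_implicit) auto
  then show ?thesis using Y0 by (simp add: Y_def I_def dirf_eq_laurent[OF k m])
qed

lemma one_point_cycle_log_line_has_field_derivative:
  assumes k: "k \<ge> 1" and m: "m \<ge> 1" and cycle: "one_point_cycle k m Q t lam X L"
    and v: "tangent (k + m) v"
  shows "((\<lambda>s. L (shiftp t s v) lam) has_field_derivative
           - dirf k m Q t v (X t lam) / fprime k m Q t (X t lam) / X t lam) (at 0)"
proof -
  have "(exp has_field_derivative X t lam) (at (L (shiftp t 0 v) lam))"
    using DERIV_exp[of "L t lam"] one_point_cycle_at_base(1)[OF cycle] by simp
  moreover have "isCont (\<lambda>s. L (shiftp t s v) lam) 0"
    using cycle v by (intro isCont_analyticML_line) (auto simp: one_point_cycle_def)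
  moreover have "eventually (\<lambda>s. exp (L (shiftp t s v) lam) = X (shiftp t s v) lam) (nhds 0)"
    using eventually_one_point_cycle_line[OF cycle v] by (rule eventually_mono) simp
  ultimately show ?thesis
    by (rule has_field_derivative_implicit[where f = exp and g = "\<lambda>s. L (shiftp t s v) lam",
          OF _ one_point_cycle_at_base(2)[OF cycle] _ one_point_cycle_line_has_field_derivative[OF k m cycle v]])
qed

lemma one_point_cycle_fprime_line_has_field_derivative:
  assumes k: "k \<ge> 1" and m: "m \<ge> 1" and cycle: "one_point_cycle k m Q t lam X L"
    and v: "tangent (k + m) v"
  shows "((\<lambda>s. fprime k m Q (shiftp t s v) (X (shiftp t s v) lam)) has_field_derivative
           deriv (dirf k m Q t v) (X t lam)
           - deriv (fprime k m Q t) (X t lam) * dirf k m Q t v (X t lam) / fprime k m Q t (X t lam))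
         (at 0)"
proof -
  define a where "a = X t lam"
  have a: "a \<noteq> 0" using one_point_cycle_at_base(2)[OF cycle] by (simp add: a_def)
  have "((\<lambda>s. laurent_deriv (exponents k m) (fcoeff k m Q (shiftp t s v)) (X (shiftp t s v) lam))
      has_field_derivative
        laurent_deriv (exponents k m) (dir_fcoeff k m Q t v) a
        + (\<Sum>n\<in>exponents k m. fcoeff k m Q t n * of_int n * of_int (n - 1) * a powi (n - 2))
          * (- dirf k m Q t v a / fprime k m Q t a)) (at 0)"
    using has_field_derivative_laurent_deriv_moving[OF fcoeff_line_has_field_derivative[OF m]
        one_point_cycle_line_has_field_derivative[OF k m cycle v]] a
    by (simp add: a_def)
  moreover have "eventually (\<lambda>s.
      laurent_deriv (exponents k m) (fcoeff k m Q (shiftp t s v)) (X (shiftp t s v) lam) =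
      fprime k m Q (shiftp t s v) (X (shiftp t s v) lam)) (nhds 0)"
    using eventually_one_point_cycle_line[OF cycle v]
    by (rule eventually_mono) (metis exp_not_eq_zero fprime_eq_laurent_deriv[OF k m])
  ultimately show ?thesis
    using deriv_dirf[OF k m a] deriv_fprime[OF k m a]
    by (auto simp: a_def DERIV_cong_ev[OF refl _ refl] field_simps)
qed

lemma represents_I0_dirf:
  assumes k: "k \<ge> 1" and m: "m \<ge> 1" and Q: "Q \<noteq> 0"
    and cycle: "one_point_cycle k m Q t lam X L" and rep: "represents_I0 k m Q t lam L A"
    and x: "x \<noteq> 0" "x \<noteq> X t lam"
  shows "dirf k m Q t A x =
    x * (fprime k m Q t x - fprime k m Q t (X t lam)) / ((x - X t lam) * fprime k m Q t (X t lam))"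
proof -
  define a where "a = X t lam"
  have a: "a \<noteq> 0" "fprime k m Q t a \<noteq> 0"
    using one_point_cycle_at_base(2)[OF cycle] one_point_cycle_fprime_nonzero[OF k m cycle]
    by (simp_all add: a_def)
  have "dirf_numerator k m Q t A = kernel_poly k m Q t a"
  proof (rule dirf_numerator_eq_kernel_poly[OF k m Q a])
    fix w assume w: "tangent (k + m) w"
    have "pair k m Q t A w = - Dir t w (\<lambda>t'. L t' lam)"
      using rep w unfolding represents_I0_def by blast
    also have "Dir t w (\<lambda>t'. L t' lam) = - dirf k m Q t w a / fprime k m Q t a / a"
      unfolding Dir_def a_def
      by (rule DERIV_imp_deriv[OF one_point_cycle_log_line_has_field_derivative[OF k m cycle w]])
    finally show "pair k m Q t A w =
        poly (dirf_numerator k m Q t w) a / (a ^ (m + 1) * fprime k m Q t a)"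
      using a by (simp add: dirf_eq_numerator[OF k m a(1)] field_simps)
  qed
  then have "dirf k m Q t A x =
      (poly (fprime_numerator k m Q t) x - fprime k m Q t a * x ^ (m + 1)) / ((x - a) * fprime k m Q t a) / x ^ m"
    using x kernel_poly(1)[OF k m a, of x] by (simp add: a_def dirf_eq_numerator[OF k m])
  also have "\<dots> = x * (poly (fprime_numerator k m Q t) x / x ^ (m + 1) - fprime k m Q t a) /
      ((x - a) * fprime k m Q t a)"
    using x a by (simp add: a_def field_simps)
  finally show ?thesis by (simp add: a_def fprime_eq_numerator[OF k m x(1)])
qed

section \<open>The phase form\<close>

lemma dirf_over_fprime_two_poles:
  assumes k: "k \<ge> 1" and m: "m \<ge> 1" and Q: "Q \<noteq> 0" and ab: "a \<noteq> 0" "b \<noteq> 0"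
  shows "finitely_singular (\<lambda>x. dirf k m Q t v x / ((x - a) * (x - b) * fprime k m Q t x))"
    and "res_0_inf (\<lambda>x. dirf k m Q t v x / ((x - a) * (x - b) * fprime k m Q t x)) = 0"
proof -
  define F where "F = fprime_numerator k m Q t"
  have F: "F \<noteq> 0" "poly F 0 \<noteq> 0" "degree F = k + m"
    using fprime_numerator_nonzero[OF k m Q] poly_fprime_numerator_0[OF k m Q] degree_fprime_numerator[OF k m]
    by (simp_all add: F_def)
  have den: "[:-a, 1:] * [:-b, 1:] * F \<noteq> 0" using F(1) by (simp only: mult_eq_0_iff) simp
  have eq: "dirf k m Q t v x / ((x - a) * (x - b) * fprime k m Q t x) =
      poly (monom 1 1 * dirf_numerator k m Q t v) x / poly ([:-a, 1:] * [:-b, 1:] * F) x"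
    if "x \<notin> {0}" for x
  proof -
    define y where "y = x ^ m"
    have x: "x \<noteq> 0" "y \<noteq> 0" using that by (simp_all add: y_def)
    have "poly (monom 1 1 * dirf_numerator k m Q t v) x / poly ([:-a, 1:] * [:-b, 1:] * F) x =
        poly (dirf_numerator k m Q t v) x / y / ((x - a) * (x - b) * (poly F x / (x * y)))"
      using x by (simp add: poly_monom field_simps)
    then show ?thesis
      using x by (simp add: y_def dirf_eq_numerator[OF k m] fprime_eq_numerator[OF k m] F_def)
  qed
  show "finitely_singular (\<lambda>x. dirf k m Q t v x / ((x - a) * (x - b) * fprime k m Q t x))"
  proof -
    have "(\<lambda>x. poly (monom 1 1 * dirf_numerator k m Q t v) x / poly ([:-a, 1:] * [:-b, 1:] * F) x)
        holomorphic_on UNIV - ({0} \<union> {x. poly ([:-a, 1:] * [:-b, 1:] * F) x = 0})"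
      by (intro holomorphic_intros) auto
    then have "(\<lambda>x. dirf k m Q t v x / ((x - a) * (x - b) * fprime k m Q t x))
        holomorphic_on UNIV - ({0} \<union> {x. poly ([:-a, 1:] * [:-b, 1:] * F) x = 0})"
      by (rule holomorphic_transform) (use eq in auto)
    then show ?thesis
      unfolding finitely_singular_def using poly_roots_finite[OF den]
      by (intro exI[of _ "{0} \<union> {x. poly ([:-a, 1:] * [:-b, 1:] * F) x = 0}"]) simp
  qed
  have "res_0_inf (\<lambda>x. poly (monom 1 1 * dirf_numerator k m Q t v) x / poly ([:-a, 1:] * [:-b, 1:] * F) x) = 0"
  proof (rule res_0_inf_rational)
    show "poly ([:-a, 1:] * [:-b, 1:] * F) 0 \<noteq> 0" using ab F by simp
    have ab_nz: "[:-a, 1:] * [:-b, 1:] \<noteq> 0" by (simp only: mult_eq_0_iff) simp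
    have "degree ([:-a, 1:] * [:-b, 1:] * F) = degree ([:-a, 1:] * [:-b, 1:]) + (k + m)"
      by (simp only: degree_mult_eq[OF ab_nz F(1)] F(3))
    also have "degree ([:-a, 1:] * [:-b, 1:]) = 2" by (subst degree_mult_eq) auto
    moreover have "degree (monom (1::complex) 1 * dirf_numerator k m Q t v) \<le> k + m"
      using degree_mult_le[of "monom (1::complex) 1" "dirf_numerator k m Q t v"]
        degree_dirf_numerator[OF k m, of Q t v]
      by (simp add: degree_monom_eq)
    ultimately show "degree (monom 1 1 * dirf_numerator k m Q t v) + 2 \<le> degree ([:-a, 1:] * [:-b, 1:] * F)"
      by simp
  qed
  then show "res_0_inf (\<lambda>x. dirf k m Q t v x / ((x - a) * (x - b) * fprime k m Q t x)) = 0"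
    using res_0_inf_cong[of "{0}", OF _ eq] by simp
qed

lemma phase_integrand_partial_fractions:
  fixes x d e f fa fb D G :: complex
  assumes "x \<noteq> 0" "d \<noteq> 0" "e \<noteq> 0" "f \<noteq> 0" "fa \<noteq> 0" "fb \<noteq> 0"
  shows "x * (f - fa) / (d * fa) * (D * (x * (f - fb) / (e * fb)) + G * f) / (x ^ 2 * f) =
    D * (f - fa - fb) / (fa * fb) / (d * e) + D / (d * e * f) + x * (f - fa) / (d * fa) * G / x ^ 2"
  using assms by (simp add: field_simps power2_eq_square)

lemma pair_I0_prod:
  assumes k: "k \<ge> 1" and m: "m \<ge> 1" and Q: "Q \<noteq> 0"
    and cycle_a: "one_point_cycle k m Q t lam Xa La" and rep_a: "represents_I0 k m Q t lam La A"
    and cycle_b: "one_point_cycle k m Q t lam Xb Lb" and rep_b: "represents_I0 k m Q t lam Lb B"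
    and prod: "is_prod k m Q t v B u"
  defines "a \<equiv> Xa t lam" and "b \<equiv> Xb t lam"
    and "fa \<equiv> fprime k m Q t (Xa t lam)" and "fb \<equiv> fprime k m Q t (Xb t lam)"
  shows "pair k m Q t A u = - res_0_inf (\<lambda>x.
           dirf k m Q t v x * (fprime k m Q t x - fa - fb) / (fa * fb) / ((x - a) * (x - b)))"
proof -
  obtain g where g: "laurent_poly g" and prod_g: "\<forall>x. x \<noteq> 0 \<longrightarrow>
      dirf k m Q t u x - dirf k m Q t v x * dirf k m Q t B x = g x * fprime k m Q t x"
    using prod unfolding is_prod_def by blast
  obtain pg n where pg: "\<And>x. x \<noteq> 0 \<Longrightarrow> g x = poly pg x / x ^ n"
    using g unfolding laurent_poly_def by blast
  have nz: "a \<noteq> 0" "b \<noteq> 0" "fa \<noteq> 0" "fb \<noteq> 0"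
    using one_point_cycle_at_base(2) one_point_cycle_fprime_nonzero[OF k m] cycle_a cycle_b
    by (auto simp: a_def b_def fa_def fb_def)
  define Dv where "Dv = dirf k m Q t v"
  \<comment> \<open>Only T1 contributes: T2 has no residues at 0 and infinity, and T3 is holomorphic off 0.\<close>
  define T1 where "T1 = (\<lambda>x. Dv x * (fprime k m Q t x - fa - fb) / (fa * fb) / ((x - a) * (x - b)))"
  define T2 where "T2 = (\<lambda>x. Dv x / ((x - a) * (x - b) * fprime k m Q t x))"
  define T3 where "T3 = (\<lambda>x. dirf k m Q t A x * poly pg x / x ^ (n + 2))"
  have T3: "T3 holomorphic_on UNIV - {0}"
    unfolding T3_def by (intro holomorphic_intros dirf_holomorphic[OF k m]) auto
  have "Dv holomorphic_on UNIV - {0, a, b}" "fprime k m Q t holomorphic_on UNIV - {0, a, b}"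
    unfolding Dv_def
    by (rule holomorphic_on_subset[OF dirf_holomorphic[OF k m]] holomorphic_on_subset[OF fprime_holomorphic[OF k m]]; blast)+
  then have T1: "T1 holomorphic_on UNIV - {0, a, b}"
    unfolding T1_def using nz
    by (intro holomorphic_on_divide holomorphic_on_mult holomorphic_on_diff holomorphic_on_const
        holomorphic_on_id) auto
  have sing: "finitely_singular T1" "finitely_singular T2" "finitely_singular T3"
  proof -
    show "finitely_singular T1"
      using T1 unfolding finitely_singular_def
      by (intro exI[of _ "{0, a, b}"]) simp
    show "finitely_singular T2"
      unfolding T2_def Dv_def by (rule dirf_over_fprime_two_poles(1)[OF k m Q nz(1,2)])
    show "finitely_singular T3"
      using T3 unfolding finitely_singular_def by (intro exI[of _ "{0}"]) simp
  qed
  have "pair k m Q t A u = - res_0_inf (\<lambda>x. T1 x + T2 x + T3 x)"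
    unfolding pair_def Let_def res_0_inf_def[symmetric]
  proof (intro arg_cong[where f = uminus] res_0_inf_cong[of "{0, a, b} \<union> {x. fprime k m Q t x = 0}"])
    have "{x. fprime k m Q t x = 0} \<subseteq> {0} \<union> {x. poly (fprime_numerator k m Q t) x = 0}"
      by (auto simp: fprime_eq_numerator[OF k m])
    then show "finite ({0, a, b} \<union> {x. fprime k m Q t x = 0})"
      using poly_roots_finite[OF fprime_numerator_nonzero[OF k m Q]] by (auto intro: finite_subset)
    fix x assume "x \<notin> {0, a, b} \<union> {x. fprime k m Q t x = 0}"
    then have x: "x \<noteq> 0" "x - a \<noteq> 0" "x - b \<noteq> 0" "fprime k m Q t x \<noteq> 0" by auto
    have "dirf k m Q t A x = x * (fprime k m Q t x - fa) / ((x - a) * fa)"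
      using represents_I0_dirf[OF k m Q cycle_a rep_a, of x] x by (simp add: a_def fa_def)
    moreover have "dirf k m Q t B x = x * (fprime k m Q t x - fb) / ((x - b) * fb)"
      using represents_I0_dirf[OF k m Q cycle_b rep_b, of x] x by (simp add: b_def fb_def)
    moreover have "dirf k m Q t u x = Dv x * dirf k m Q t B x + g x * fprime k m Q t x"
      using prod_g x(1) by (simp add: Dv_def algebra_simps)
    moreover have "T3 x = dirf k m Q t A x * g x / x ^ 2"
      using x by (simp add: T3_def pg power_add power2_eq_square)
    ultimately show "dirf k m Q t A x * dirf k m Q t u x / (x ^ 2 * fprime k m Q t x) = T1 x + T2 x + T3 x"
      using phase_integrand_partial_fractions[OF x nz(3,4), of "Dv x" "g x"]
      by (simp add: T1_def T2_def)
  qed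
  also have "\<dots> = - (res_0_inf T1 + res_0_inf T2 + res_0_inf T3)"
    using sing by (simp add: res_0_inf_add finitely_singular_add)
  also have "res_0_inf T2 = 0"
    unfolding T2_def Dv_def by (rule dirf_over_fprime_two_poles(2)[OF k m Q nz(1,2)])
  also have "res_0_inf T3 = 0" by (rule res_0_inf_holomorphic[OF T3])
  finally show ?thesis by (simp add: T1_def Dv_def)
qed

lemma phase_form_distinct:
  assumes k: "k \<ge> 1" and m: "m \<ge> 1" and Q: "Q \<noteq> 0"
    and cycle_a: "one_point_cycle k m Q t lam Xa La" and rep_a: "represents_I0 k m Q t lam La A"
    and cycle_b: "one_point_cycle k m Q t lam Xb Lb" and rep_b: "represents_I0 k m Q t lam Lb B"
    and v: "tangent (k + m) v" and prod: "is_prod k m Q t v B u" and ab: "Xa t lam \<noteq> Xb t lam"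
  shows "pair k m Q t A u = Dir t v (\<lambda>t'. Xa t' lam - Xb t' lam) / (Xa t lam - Xb t lam)"
proof -
  define a b where "a = Xa t lam" and "b = Xb t lam"
  define fa fb where "fa = fprime k m Q t a" and "fb = fprime k m Q t b"
  define phi where "phi = (\<lambda>x. dirf k m Q t v x * (fprime k m Q t x - fa - fb) / (fa * fb))"
  have nz: "a \<noteq> 0" "b \<noteq> 0" "fa \<noteq> 0" "fb \<noteq> 0"
    using one_point_cycle_at_base(2) one_point_cycle_fprime_nonzero[OF k m] cycle_a cycle_b
    by (auto simp: a_def b_def fa_def fb_def)
  have phi: "phi holomorphic_on UNIV - {0}"
    unfolding phi_def using nz
    by (intro holomorphic_intros dirf_holomorphic[OF k m] fprime_holomorphic[OF k m]) auto
  have "pair k m Q t A u = - res_0_inf (\<lambda>x. phi x / ((x - a) * (x - b)))"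
    using pair_I0_prod[OF k m Q cycle_a rep_a cycle_b rep_b prod]
    by (simp add: phi_def a_def b_def fa_def fb_def)
  also have "\<dots> = (phi a - phi b) / (a - b)"
    using res_0_inf_two_poles[OF nz(1,2) ab[folded a_def b_def] phi] by (metis minus_diff_eq minus_divide_left)
  also have "phi a - phi b = - dirf k m Q t v a / fa + dirf k m Q t v b / fb"
    using nz by (simp add: phi_def fa_def fb_def field_simps)
  also have "\<dots> = Dir t v (\<lambda>t'. Xa t' lam - Xb t' lam)"
    unfolding Dir_def
    using DERIV_imp_deriv[OF DERIV_diff[OF one_point_cycle_line_has_field_derivative[OF k m cycle_a v]
          one_point_cycle_line_has_field_derivative[OF k m cycle_b v]]]
    by (simp add: a_def b_def fa_def fb_def)
  finally show ?thesis by (simp add: a_def b_def)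
qed

lemma phase_form_diagonal:
  assumes k: "k \<ge> 1" and m: "m \<ge> 1" and Q: "Q \<noteq> 0"
    and cycle: "one_point_cycle k m Q t lam X L" and rep: "represents_I0 k m Q t lam L A"
    and v: "tangent (k + m) v" and prod: "is_prod k m Q t v A u"
  shows "pair k m Q t A u = - Dir t v (\<lambda>t'. fprime k m Q t' (X t' lam)) / fprime k m Q t (X t lam)"
proof -
  define a where "a = X t lam"
  define fa where "fa = fprime k m Q t a"
  define Dv where "Dv = dirf k m Q t v"
  define fp where "fp = fprime k m Q t"
  define phi where "phi = (\<lambda>x. Dv x * (fp x - fa - fa) / (fa * fa))"
  have nz: "a \<noteq> 0" "fa \<noteq> 0"
    using one_point_cycle_at_base(2)[OF cycle] one_point_cycle_fprime_nonzero[OF k m cycle]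
    by (auto simp: a_def fa_def)
  have Dv: "Dv holomorphic_on UNIV - {0}" and fp: "fp holomorphic_on UNIV - {0}"
    unfolding Dv_def fp_def by (rule dirf_holomorphic[OF k m] fprime_holomorphic[OF k m])+
  have phi: "phi holomorphic_on UNIV - {0}"
    unfolding phi_def using nz by (intro holomorphic_intros Dv fp) auto
  have "pair k m Q t A u = - res_0_inf (\<lambda>x. phi x / (x - a)^2)"
    using pair_I0_prod[OF k m Q cycle rep cycle rep prod]
    by (simp add: phi_def a_def fa_def Dv_def fp_def power2_eq_square)
  also have "\<dots> = deriv phi a" using res_0_inf_double_pole[OF nz(1) phi] by simp
  also have "\<dots> = Dv a * deriv fp a / fa^2 - deriv Dv a / fa"
  proof -
    have "(Dv has_field_derivative deriv Dv a) (at a)" "(fp has_field_derivative deriv fp a) (at a)"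
      using nz(1) by (auto intro!: holomorphic_derivI[OF Dv] holomorphic_derivI[OF fp] open_delete)
    then have "(phi has_field_derivative
        (deriv Dv a * (fp a - fa - fa) + Dv a * deriv fp a) / (fa * fa)) (at a)"
      unfolding phi_def using nz(2) by (auto intro!: derivative_eq_intros)
    then show ?thesis
      using nz by (simp add: DERIV_imp_deriv fp_def fa_def field_simps power2_eq_square)
  qed
  also have "\<dots> = - Dir t v (\<lambda>t'. fprime k m Q t' (X t' lam)) / fa"
  proof -
    have Dir: "Dir t v (\<lambda>t'. fprime k m Q t' (X t' lam)) = deriv Dv a - deriv fp a * Dv a / fa"
      unfolding Dir_def a_def fa_def Dv_def fp_def
      by (rule DERIV_imp_deriv[OF one_point_cycle_fprime_line_has_field_derivative[OF k m cycle v]])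
    show ?thesis unfolding Dir using nz by (simp add: field_simps power2_eq_square)
  qed
  finally show ?thesis by (simp add: fa_def a_def)
qed

theorem mainTheorem11:
  fixes k m :: nat and Q lam :: complex and t :: "nat \<Rightarrow> complex"
    and Xa La Xb Lb :: "(nat \<Rightarrow> complex) \<Rightarrow> complex \<Rightarrow> complex"
    and A B :: "nat \<Rightarrow> complex"
  assumes "k \<ge> 1" and "m \<ge> 1" and "Q \<noteq> 0"
    and "semisimple k m Q t"
    and "one_point_cycle k m Q t lam Xa La"
    and "one_point_cycle k m Q t lam Xb Lb"
    and "represents_I0 k m Q t lam La A"
    and "represents_I0 k m Q t lam Lb B"
  shows "(Xa t lam \<noteq> Xb t lam \<longrightarrow>
            (\<forall>v u. tangent (k + m) v \<longrightarrow> is_prod k m Q t v B u \<longrightarrow>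
               pair k m Q t A u = Dir t v (\<lambda>t'. Xa t' lam - Xb t' lam) / (Xa t lam - Xb t lam)))
       \<and> (\<forall>v u. tangent (k + m) v \<longrightarrow> is_prod k m Q t v A u \<longrightarrow>
               pair k m Q t A u =
                 - Dir t v (\<lambda>t'. fprime k m Q t' (Xa t' lam)) / fprime k m Q t (Xa t lam))"
  using phase_form_distinct[OF assms(1-3,5,7,6,8)] phase_form_diagonal[OF assms(1-3,5,7)]
  by blast

end
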